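(* Let $N=2^n$ and let ${\cal B}:\mathbb{C}^{N\times N}\to\mathbb{C}^m$ be a linear map such that ${\cal B}{\cal H}^{-1}:\mathbb{C}^{N\times N}\to\mathbb{C}^m$ has the restricted isometry property of order $2s$ and level $\delta<1$, where ${\cal H}$ is the discrete bivariate Haar transform. Suppose that $\mathbf{D}\in\mathbb{C}^{N\times N}$ satisfies the tube constraint $\|{\cal B}(\mathbf{D})\|_2\le\varepsilon$. Then $$\|\mathbf{D}\|_2\lesssim\Big(\frac{\|\mathbf{D}\|_{TV}}{\sqrt{s}}\Big)\log(N^2/s)+\varepsilon.$$
   Context: Notation: $u\lesssim v$ means $u\le Cv$ for a constant $C>0$ (called absolute in the paper). $\|\cdot\|_2$ is the entrywise (Frobenius) norm. A linear map has the restricted isometry property of order $s$ and level $\delta$ if $(1-\delta)\|\mathbf{X}\|_2^2\le\|{\cal B}{\cal H}^{-1}(\mathbf{X})\|_2^2\le(1+\delta)\|\mathbf{X}\|_2^2$ (stated here for ${\cal B}{\cal H}^{-1}$) for all $\mathbf{X}$ with at most $s$ nonzero entries. Anisotropic total variation: $\|\mathbf{X}\|_{TV}=\sum_{j=1}^{N-1}\sum_{k=1}^N|X_{j+1,k}-X_{j,k}|+\sum_{j=1}^N\sum_{k=1}^{N-1}|X_{j,k+1}-X_{j,k}|$. Haar transform: $H^0=\mathbf{1}_{[0,1)}$, $H^1=\mathbf{1}_{[0,1/2)}-\mathbf{1}_{[1/2,1)}$; for $e=(e_1,e_2)\in\{(0,1),(1,0),(1,1)\}$, $H^e(u,v)=H^{e_1}(u)H^{e_2}(v)$,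 $H^e_{j,k}(x)=2^jH^e(2^jx-k)$, $j\ge0$, $k\in\mathbb{Z}^2\cap2^j[0,1)^2$. Identifying $\mathbf{X}\in\mathbb{C}^{N\times N}$ isometrically with the function equal to $NX_{j,k}$ on $[\frac{j-1}{N},\frac jN)\times[\frac{k-1}{N},\frac kN)$, the constant function and $\{H^e_{j,k}:j\le n-1\}$ give an orthonormal basis of $\mathbb{C}^{N\times N}$ (inner product $\mathrm{tr}(\mathbf{X}\mathbf{Y}^* )$); ${\cal H}(\mathbf{X})$ is the $N\times N$ array of coefficients of $\mathbf{X}$ in this basis. *)

theory Defs
  imports "HOL-Analysis.Analysis"
begin

text \<open>N x N complex matrices are functions nat => nat => complex, rows/columns indexed
  0..N-1 (0-based), vanishing outside the index range. Vectors in C^m are nat => complex;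
  only the entries 0..m-1 are relevant.\<close>

definition mats :: "nat \<Rightarrow> (nat \<Rightarrow> nat \<Rightarrow> complex) set" where
  "mats N = {X. \<forall>j k. (N \<le> j \<or> N \<le> k) \<longrightarrow> X j k = 0}"

definition fro :: "nat \<Rightarrow> (nat \<Rightarrow> nat \<Rightarrow> complex) \<Rightarrow> real" where
  "fro N X = sqrt (\<Sum>j<N. \<Sum>k<N. (cmod (X j k))\<^sup>2)"

definition vnorm :: "nat \<Rightarrow> (nat \<Rightarrow> complex) \<Rightarrow> real" where
  "vnorm m v = sqrt (\<Sum>i<m. (cmod (v i))\<^sup>2)"

definition tv :: "nat \<Rightarrow> (nat \<Rightarrow> nat \<Rightarrow> complex) \<Rightarrow> real" where
  "tv N X = (\<Sum>j<N - 1. \<Sum>k<N. cmod (X (j+1) k - X j k))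
          + (\<Sum>j<N. \<Sum>k<N - 1. cmod (X j (k+1) - X j k))"

definition lin_on_mats :: "nat \<Rightarrow> ((nat \<Rightarrow> nat \<Rightarrow> complex) \<Rightarrow> (nat \<Rightarrow> complex)) \<Rightarrow> bool" where
  "lin_on_mats N B \<longleftrightarrow>
     (\<forall>X\<in>mats N. \<forall>Y\<in>mats N. B (\<lambda>j k. X j k + Y j k) = (\<lambda>i. B X i + B Y i)) \<and>
     (\<forall>X\<in>mats N. \<forall>c. B (\<lambda>j k. c * X j k) = (\<lambda>i. c * B X i))"

definition rip :: "nat \<Rightarrow> nat \<Rightarrow> ((nat \<Rightarrow> nat \<Rightarrow> complex) \<Rightarrow> (nat \<Rightarrow> complex)) \<Rightarrow> nat \<Rightarrow> real \<Rightarrow> bool" where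
  "rip N m A s \<delta> \<longleftrightarrow>
     (\<forall>X\<in>mats N. card {(j,k). j < N \<and> k < N \<and> X j k \<noteq> 0} \<le> s \<longrightarrow>
        (1 - \<delta>) * (fro N X)\<^sup>2 \<le> (vnorm m (A X))\<^sup>2 \<and>
        (vnorm m (A X))\<^sup>2 \<le> (1 + \<delta>) * (fro N X)\<^sup>2)"

text \<open>Univariate Haar functions: H^0 (False) and H^1 (True).\<close>
definition haar1 :: "bool \<Rightarrow> real \<Rightarrow> real" where
  "haar1 e t = (if \<not> e then (if 0 \<le> t \<and> t < 1 then 1 else 0)
               else (if 0 \<le> t \<and> t < 1/2 then 1 else if 1/2 \<le> t \<and> t < 1 then -1 else 0))"

definition haar2 :: "bool \<Rightarrow> bool \<Rightarrow> nat \<Rightarrow> nat \<Rightarrow> nat \<Rightarrow> real \<Rightarrow> real \<Rightarrow> real" where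
  "haar2 e1 e2 l q1 q2 u v =
     2 ^ l * haar1 e1 (2 ^ l * u - real q1) * haar1 e2 (2 ^ l * v - real q2)"

definition haar_level :: "nat \<Rightarrow> nat \<Rightarrow> nat" where
  "haar_level j k = (LEAST l. max j k < 2 ^ Suc l)"

text \<open>Basis element placed at array position (j,k), 0 <= j,k < N = 2^n, viewed as an
  N x N matrix via the isometric identification (entry (a,b) = value on the cell
  [a/N,(a+1)/N) x [b/N,(b+1)/N) divided by N). Position (0,0) holds the constant
  function; position (j,k) with 2^l <= max j k < 2^(l+1) holds H^e_{l,q} with
  e = (j >= 2^l, k >= 2^l), q = (j mod 2^l, k mod 2^l).\<close>
definition haar_basis :: "nat \<Rightarrow> nat \<Rightarrow> nat \<Rightarrow> nat \<Rightarrow> nat \<Rightarrow> complex" where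
  "haar_basis n j k a b =
     (let N = (2::nat) ^ n in
      if N \<le> a \<or> N \<le> b then 0
      else if j = 0 \<and> k = 0 then complex_of_real (1 / real N)
      else (let l = haar_level j k in
            complex_of_real (haar2 (2 ^ l \<le> j) (2 ^ l \<le> k) l (j mod 2 ^ l) (k mod 2 ^ l)
                               (real a / real N) (real b / real N) / real N)))"

definition haar :: "nat \<Rightarrow> (nat \<Rightarrow> nat \<Rightarrow> complex) \<Rightarrow> (nat \<Rightarrow> nat \<Rightarrow> complex)" where
  "haar n X = (\<lambda>j k. if j < 2 ^ n \<and> k < 2 ^ n then
       (\<Sum>a<2 ^ n. \<Sum>b<2 ^ n. X a b * cnj (haar_basis n j k a b)) else 0)"

definition haar_inv :: "nat \<Rightarrow> (nat \<Rightarrow> nat \<Rightarrow> complex) \<Rightarrow> (nat \<Rightarrow> nat \<Rightarrow> complex)" where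
  "haar_inv n Y = (\<lambda>a b. \<Sum>j<2 ^ n. \<Sum>k<2 ^ n. Y j k * haar_basis n j k a b)"

end

theory Submission
  imports Defs
begin

text \<open>Write \<open>c = haar n D\<close>. The Haar basis is orthonormal, so \<open>\<parallel>D\<parallel>\<^sub>2 = \<parallel>c\<parallel>\<^sub>2\<close>, and the RIP of
  \<open>B \<circ> haar_inv n\<close> applies to \<open>c\<close> restricted to any \<open>2s\<close> indices. Splitting the indices into
  blocks of \<open>s\<close> in order of decreasing \<open>|c|\<close> gives the usual robust estimate
  \<open>\<parallel>c\<parallel>\<^sub>2 \<lesssim> \<parallel>B D\<parallel>\<^sub>2 + \<sigma>/sqrt s\<close>, where \<open>\<sigma>\<close> is the \<open>\<ell>\<^sub>1\<close>-mass of \<open>c\<close> outside any \<open>s\<close> indices.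
  Take for these the Haar levels below \<open>L\<close> with \<open>4\<^sup>L \<le> s\<close>. A detail coefficient pairs \<open>D\<close> with a
  function of mean zero along one axis, so it is an average of differences of \<open>D\<close> over its support;
  hence each of the remaining \<open>n - L \<le> 3 ln (N\<^sup>2/s)\<close> levels has \<open>\<ell>\<^sub>1\<close>-mass at most \<open>\<parallel>D\<parallel>\<^sub>T\<^sub>V\<close>.\<close>

section \<open>Robust estimates from a restricted isometry on index sets\<close>

lemma vnorm_nonneg: "0 \<le> vnorm m u"
  by (simp add: vnorm_def sum_nonneg)

lemma vnorm_add_le: "vnorm m (\<lambda>i. u i + v i) \<le> vnorm m u + vnorm m v"
proof -
  have "vnorm m (\<lambda>i. u i + v i) = L2_set (\<lambda>i. cmod (u i + v i)) {..<m}"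
    by (simp add: vnorm_def L2_set_def)
  also have "\<dots> \<le> L2_set (\<lambda>i. cmod (u i) + cmod (v i)) {..<m}"
    by (rule L2_set_mono) (auto simp: norm_triangle_ineq)
  also have "\<dots> \<le> L2_set (\<lambda>i. cmod (u i)) {..<m} + L2_set (\<lambda>i. cmod (v i)) {..<m}"
    by (rule L2_set_triangle_ineq)
  finally show ?thesis by (simp add: vnorm_def L2_set_def)
qed

lemma vnorm_diff_le: "vnorm m u \<le> vnorm m (\<lambda>i. u i + v i) + vnorm m v"
  using vnorm_add_le[of m "\<lambda>i. u i + v i" "\<lambda>i. - v i"] by (simp add: vnorm_def)

lemma sqrt_mult_divide: "0 < c \<Longrightarrow> sqrt c * x / c = x / sqrt c"
  by (metis less_eq_real_def real_div_sqrt times_divide_eq_left divide_divide_eq_right mult.commute)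

lemma L2_set_Un_le: "L2_set w (T \<union> U) \<le> L2_set w T + L2_set w U"
proof (cases "finite T \<and> finite U")
  case True
  have "(\<Sum>p\<in>T \<union> U. (w p)\<^sup>2) \<le> (\<Sum>p\<in>T. (w p)\<^sup>2) + (\<Sum>p\<in>U. (w p)\<^sup>2)"
    using True by (simp add: sum_Un sum_nonneg)
  then have "L2_set w (T \<union> U) \<le> sqrt ((L2_set w T)\<^sup>2 + (L2_set w U)\<^sup>2)"
    by (simp add: L2_set_def sum_nonneg)
  also have "\<dots> \<le> L2_set w T + L2_set w U"
    by (rule sqrt_sum_squares_le_sum) simp_all
  finally show ?thesis .
qed auto

lemma L2_set_le_sqrt_card_mult:
  assumes "\<And>p. p \<in> J \<Longrightarrow> 0 \<le> w p \<and> w p \<le> t" and "0 \<le> t" and "card J \<le> s"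
  shows "L2_set w J \<le> sqrt s * t"
proof -
  have "L2_set w J \<le> L2_set (\<lambda>_. t) J"
    using assms(1) by (intro L2_set_mono) auto
  also have "\<dots> = sqrt (card J) * \<bar>t\<bar>"
    by (rule L2_set_constant)
  also have "\<dots> \<le> sqrt s * t"
    using assms(2,3) by (simp add: mult_right_mono)
  finally show ?thesis .
qed

text \<open>Since \<open>\<Sum>w\<^sup>2 \<le> t \<Sum>w\<close>, this is AM-GM applied to \<open>sqrt (t \<Sum>w)\<close>.\<close>
lemma L2_set_le_sup_sum:
  assumes "\<And>p. p \<in> J \<Longrightarrow> 0 \<le> w p \<and> w p \<le> t" and "0 \<le> t" and "0 < r"
  shows "L2_set w J \<le> r * t + sum w J / r"
proof -
  have sum_nonneg: "0 \<le> sum w J"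
    using assms(1) by (intro sum_nonneg) blast
  have "(\<Sum>p\<in>J. (w p)\<^sup>2) \<le> (\<Sum>p\<in>J. t * w p)"
    using assms(1) by (intro sum_mono) (simp add: power2_eq_square mult_right_mono)
  also have "\<dots> \<le> (r * t + sum w J / r)\<^sup>2"
  proof -
    have "0 \<le> (r * t - sum w J / r)\<^sup>2" by simp
    then show ?thesis
      using assms(2,3) sum_nonneg
      by (simp add: sum_distrib_left[symmetric] power2_eq_square field_simps)
  qed
  finally have "L2_set w J \<le> sqrt ((r * t + sum w J / r)\<^sup>2)"
    unfolding L2_set_def by (rule real_sqrt_le_mono)
  also have "\<dots> = r * t + sum w J / r"
    using assms(2,3) sum_nonneg by simp
  finally show ?thesis .
qed

definition heaviest_subset :: "('i \<Rightarrow> real) \<Rightarrow> nat \<Rightarrow> 'i set \<Rightarrow> 'i set \<Rightarrow> bool" where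
  "heaviest_subset w s J S \<longleftrightarrow>
     S \<subseteq> J \<and> card S = s \<and> (\<forall>S'. S' \<subseteq> J \<and> card S' = s \<longrightarrow> sum w S' \<le> sum w S)"

lemma heaviest_subset_exists:
  assumes "finite J" and "s \<le> card J"
  shows "\<exists>S. heaviest_subset w s J S"
proof -
  define F where "F = {S. S \<subseteq> J \<and> card S = s}"
  have finF: "finite F" using assms(1) unfolding F_def by auto
  have "F \<noteq> {}"
    using obtain_subset_with_card_n[OF assms(2)] unfolding F_def by blast
  then have "Max (sum w ` F) \<in> sum w ` F" using finF by simp
  then obtain S where SF: "S \<in> F" and S_Max: "sum w S = Max (sum w ` F)" by auto
  have "sum w S' \<le> sum w S" if "S' \<in> F" for S'
    using finF that unfolding S_Max by simp
  then have "heaviest_subset w s J S" using SF unfolding heaviest_subset_def F_def by blast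
  then show ?thesis ..
qed

lemma heaviest_subset_entry_le:
  assumes "heaviest_subset w s J S" and "finite J" and "p \<in> J - S"
  shows "w p * s \<le> sum w S"
proof -
  have SJ: "S \<subseteq> J" and cS: "card S = s"
    and S_max: "\<And>S'. S' \<subseteq> J \<Longrightarrow> card S' = s \<Longrightarrow> sum w S' \<le> sum w S"
    using assms(1) unfolding heaviest_subset_def by auto
  have finS: "finite S" using SJ assms(2) finite_subset by auto
  have exchange: "w p \<le> w q" if q: "q \<in> S" for q
  proof -
    have "0 < s" using q finS cS card_gt_0_iff by blast
    then have "card (insert p (S - {q})) = s"
      using assms(3) q finS cS by (simp add: card_insert_if)
    then have "sum w (insert p (S - {q})) \<le> sum w S"
      using assms(3) q SJ by (intro S_max) auto
    then show ?thesis using assms(3) q finS by (simp add: sum_diff1)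
  qed
  have "w p * s = (\<Sum>q\<in>S. w p)" using cS by simp
  also have "\<dots> \<le> sum w S" using exchange by (intro sum_mono) auto
  finally show ?thesis .
qed

lemma heaviest_subset_ge:
  assumes "heaviest_subset w s J S" and "finite J" and "\<And>p. 0 \<le> w p"
    and "S' \<subseteq> J" and "card S' \<le> s"
  shows "sum w S' \<le> sum w S"
proof -
  have SJ: "S \<subseteq> J" and cS: "card S = s"
    and S_max: "\<And>S'. S' \<subseteq> J \<Longrightarrow> card S' = s \<Longrightarrow> sum w S' \<le> sum w S"
    using assms(1) unfolding heaviest_subset_def by auto
  have finS': "finite S'" using assms(2,4) finite_subset by auto
  have "s - card S' \<le> card (J - S')"
    using card_Diff_subset[OF finS' assms(4)] card_mono[OF assms(2) SJ] cS assms(5) by simp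
  then obtain X where X: "X \<subseteq> J - S'" "card X = s - card S'"
    using obtain_subset_with_card_n by metis
  have finX: "finite X" using X(1) assms(2) finite_subset by blast
  have "card (S' \<union> X) = s" using X finX finS' assms(5) by (subst card_Un_disjoint) auto
  then have "sum w (S' \<union> X) \<le> sum w S" using X assms(4) by (intro S_max) auto
  moreover have "sum w S' \<le> sum w (S' \<union> X)"
    using finX finS' assms(3) by (intro sum_mono2) auto
  ultimately show ?thesis by simp
qed

text \<open>\<open>A T\<close> models the measurements of the coefficient vector restricted to the index set \<open>T\<close>,
  \<open>w\<close> the magnitudes of its entries.\<close>
locale rip_on_subsets =
  fixes I :: "'i set" and A :: "'i set \<Rightarrow> nat \<Rightarrow> complex" and m :: nat
    and w :: "'i \<Rightarrow> real" and s :: nat and r0 r1 :: real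
  assumes finite_I: "finite I"
    and additive: "\<And>T U. T \<subseteq> I \<Longrightarrow> U \<subseteq> I \<Longrightarrow> T \<inter> U = {} \<Longrightarrow> A (T \<union> U) = (\<lambda>i. A T i + A U i)"
    and upper: "\<And>T. T \<subseteq> I \<Longrightarrow> card T \<le> 2 * s \<Longrightarrow> vnorm m (A T) \<le> r1 * L2_set w T"
    and lower: "\<And>T. T \<subseteq> I \<Longrightarrow> card T \<le> 2 * s \<Longrightarrow> r0 * L2_set w T \<le> vnorm m (A T)"
    and s_pos: "1 \<le> s" and w_nonneg: "\<And>p. 0 \<le> w p"
    and r0_pos: "0 < r0" and r1_nonneg: "0 \<le> r1"
begin

lemma sqrt_s_pos: "0 < sqrt s"
  using s_pos by simp

lemma finite_subset_I: "J \<subseteq> I \<Longrightarrow> finite J"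
  using finite_I finite_subset by blast

lemma A_split:
  assumes "S \<subseteq> J" and "J \<subseteq> I"
  shows "A J = (\<lambda>i. A S i + A (J - S) i)"
proof -
  have "J = S \<union> (J - S)" using assms(1) by blast
  then have "A J = A (S \<union> (J - S))" by (rule arg_cong)
  also have "\<dots> = (\<lambda>i. A S i + A (J - S) i)"
    by (rule additive) (use assms in auto)
  finally show ?thesis .
qed

lemma sum_split_subset:
  assumes "S \<subseteq> J" and "J \<subseteq> I"
  shows "sum w J = sum w S + sum w (J - S)"
  using sum.subset_diff[OF assms(1) finite_subset_I[OF assms(2)]] by (simp add: add.commute)

text \<open>Peeling off the \<open>s\<close> heaviest entries repeatedly (the usual block decomposition of
  a vector sorted by magnitude): each block has \<open>\<ell>\<^sub>2\<close>-norm at most \<open>sqrt s\<close> times the average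
  of the previous block.\<close>
lemma vnorm_le_small_bounded:
  assumes "J \<subseteq> I" and "card J \<le> s" and "\<And>p. p \<in> J \<Longrightarrow> w p \<le> t" and "0 \<le> t"
  shows "vnorm m (A J) \<le> r1 * (sqrt s * t)"
proof -
  have "vnorm m (A J) \<le> r1 * L2_set w J"
    by (rule upper) (use assms in auto)
  also have "\<dots> \<le> r1 * (sqrt s * t)"
    using assms w_nonneg r1_nonneg by (intro mult_left_mono L2_set_le_sqrt_card_mult) auto
  finally show ?thesis .
qed

lemma vnorm_le_of_bounded:
  assumes "J \<subseteq> I" and "\<And>p. p \<in> J \<Longrightarrow> w p \<le> t" and "0 \<le> t"
  shows "vnorm m (A J) \<le> r1 * (sqrt s * t + sum w J / sqrt s)"
  using assms
proof (induction "card J" arbitrary: J t rule: less_induct)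
  case less
  show ?case
  proof (cases "card J \<le> s")
    case True
    have "0 \<le> r1 * (sum w J / sqrt s)"
      using w_nonneg r1_nonneg by (simp add: sum_nonneg)
    then show ?thesis
      using vnorm_le_small_bounded[OF less.prems(1) True less.prems(2,3)] by (simp add: distrib_left)
  next
    case False
    have finJ: "finite J" using finite_subset_I less.prems(1) .
    have "s \<le> card J" using False by simp
    then obtain S where heaviest: "heaviest_subset w s J S"
      using heaviest_subset_exists[OF finJ] by blast
    then have SJ: "S \<subseteq> J" and cS: "card S = s" unfolding heaviest_subset_def by auto
    define t' where "t' = sum w S / s"
    have t'_nonneg: "0 \<le> t'" unfolding t'_def using w_nonneg by (simp add: sum_nonneg)
    have bounded: "w p \<le> t'" if "p \<in> J - S" for p
      using heaviest_subset_entry_le[OF heaviest finJ that] s_pos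
      unfolding t'_def by (simp add: pos_le_divide_eq)
    have smaller: "card (J - S) < card J"
      using card_Diff_subset[OF _ SJ] finite_subset_I less.prems(1) SJ cS False s_pos by auto
    have "J - S \<subseteq> I" using less.prems(1) by blast
    note IH = less.hyps[OF smaller this bounded t'_nonneg]
    have "sqrt s * t' + sum w (J - S) / sqrt s = sum w J / sqrt s"
      using sum_split_subset[OF SJ less.prems(1)] s_pos unfolding t'_def
      by (simp add: sqrt_mult_divide add_divide_distrib)
    then have "vnorm m (A (J - S)) \<le> r1 * (sum w J / sqrt s)" using IH by simp
    moreover have "vnorm m (A S) \<le> r1 * (sqrt s * t)"
      using SJ less.prems cS by (intro vnorm_le_small_bounded) auto
    moreover have "vnorm m (A J) \<le> vnorm m (A S) + vnorm m (A (J - S))"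
      unfolding A_split[OF SJ less.prems(1)] by (rule vnorm_add_le)
    ultimately show ?thesis by (simp add: distrib_left)
  qed
qed

text \<open>Below the second heaviest block every entry is at most the average of that block.\<close>
lemma below_two_heaviest:
  assumes T0: "heaviest_subset w s I T0" and T1: "heaviest_subset w s (I - T0) T1"
  shows "vnorm m (A (I - T0 - T1)) \<le> r1 * (sum w (I - T0) / sqrt s)"
    and "L2_set w (I - T0 - T1) \<le> sum w (I - T0) / sqrt s"
proof -
  define J where "J = I - T0 - T1"
  define t where "t = sum w T1 / s"
  have T1I: "T1 \<subseteq> I - T0" using T1 unfolding heaviest_subset_def by auto
  have JI: "J \<subseteq> I" unfolding J_def by blast
  have t_nonneg: "0 \<le> t" unfolding t_def using w_nonneg by (simp add: sum_nonneg)
  have J_bounded: "w p \<le> t" if "p \<in> J" for p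
  proof -
    have "w p * s \<le> sum w T1"
      using heaviest_subset_entry_le[OF T1 _ that[unfolded J_def]] finite_I by simp
    then show ?thesis unfolding t_def using s_pos by (simp add: pos_le_divide_eq)
  qed
  have \<sigma>_eq: "sqrt s * t + sum w J / sqrt s = sum w (I - T0) / sqrt s"
  proof -
    have "sum w (I - T0) = sum w T1 + sum w J"
      using sum_split_subset[OF T1I] unfolding J_def by simp
    then show ?thesis unfolding t_def using s_pos
      by (simp add: sqrt_mult_divide add_divide_distrib)
  qed
  show "vnorm m (A (I - T0 - T1)) \<le> r1 * (sum w (I - T0) / sqrt s)"
    using vnorm_le_of_bounded[OF JI J_bounded t_nonneg] \<sigma>_eq unfolding J_def by simp
  show "L2_set w (I - T0 - T1) \<le> sum w (I - T0) / sqrt s"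
    using L2_set_le_sup_sum[of J w t "sqrt s"] J_bounded w_nonneg t_nonneg sqrt_s_pos \<sigma>_eq
    unfolding J_def by simp
qed

text \<open>The two heaviest blocks \<open>U\<close> are controlled by the lower RIP bound, the rest by
  \<open>below_two_heaviest\<close>; any \<open>S\<close> of size \<open>s\<close> is no heavier than the heaviest block.\<close>
lemma L2_set_le_best_s_term:
  assumes cI: "2 * s \<le> card I" and SI: "S \<subseteq> I" and cS: "card S \<le> s"
  shows "L2_set w I \<le> (vnorm m (A I) + r1 * (sum w (I - S) / sqrt s)) / r0 + sum w (I - S) / sqrt s"
proof -
  have "s \<le> card I" using cI by simp
  then obtain T0 where T0: "heaviest_subset w s I T0"
    using heaviest_subset_exists[OF finite_I] by blast
  then have T0I: "T0 \<subseteq> I" and c0: "card T0 = s" unfolding heaviest_subset_def by auto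
  have "s \<le> card (I - T0)" using card_Diff_subset[OF finite_subset_I[OF T0I] T0I] c0 cI by simp
  then obtain T1 where T1: "heaviest_subset w s (I - T0) T1"
    using heaviest_subset_exists[of "I - T0"] finite_I by blast
  then have T1I: "T1 \<subseteq> I - T0" and c1: "card T1 = s" unfolding heaviest_subset_def by auto
  define U where "U = T0 \<union> T1"
  define \<sigma> where "\<sigma> = sum w (I - S) / sqrt s"
  have UI: "U \<subseteq> I" unfolding U_def using T0I T1I by auto
  have IU: "I - U = I - T0 - T1" unfolding U_def by blast
  have cU: "card U \<le> 2 * s" unfolding U_def using c0 c1 card_Un_le[of T0 T1] by simp
  have tail_le: "sum w (I - T0) / sqrt s \<le> \<sigma>"
  proof -
    have "sum w S \<le> sum w T0" using heaviest_subset_ge[OF T0 finite_I w_nonneg SI cS] .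
    then have "sum w (I - T0) \<le> sum w (I - S)"
      using sum_split_subset[OF T0I] sum_split_subset[OF SI] by simp
    then show ?thesis unfolding \<sigma>_def using sqrt_s_pos by (simp add: divide_right_mono)
  qed
  have AJ: "vnorm m (A (I - U)) \<le> r1 * \<sigma>"
    using below_two_heaviest(1)[OF T0 T1] tail_le r1_nonneg unfolding IU
    by (meson mult_left_mono order_trans)
  have L2J: "L2_set w (I - U) \<le> \<sigma>"
    using below_two_heaviest(2)[OF T0 T1] tail_le unfolding IU by linarith
  have "r0 * L2_set w U \<le> vnorm m (A U)" using lower[OF UI cU] .
  also have "\<dots> \<le> vnorm m (A I) + vnorm m (A (I - U))"
    using vnorm_diff_le[of m "A U" "A (I - U)"] A_split[OF UI subset_refl] by simp
  finally have "L2_set w U \<le> (vnorm m (A I) + r1 * \<sigma>) / r0"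
    using AJ r0_pos by (simp add: pos_le_divide_eq mult.commute)
  moreover have "L2_set w I \<le> L2_set w U + L2_set w (I - U)"
    using L2_set_Un_le[of w U "I - U"] UI by (simp add: Un_absorb1)
  ultimately show ?thesis using L2J unfolding \<sigma>_def by linarith
qed

end

section \<open>The discrete Haar basis\<close>

lemma div_eq_iff_mult_le_less: "(K::nat) > 0 \<Longrightarrow> a div K = q \<longleftrightarrow> q * K \<le> a \<and> a < (q+1) * K"
  by (metis div_less_iff_less_mult le_antisym less_add_one
    less_eq_div_iff_mult_less_eq less_inc_imp_less_eq)

lemma haar1_False_sample: assumes "(K::nat) > 0"
  shows "haar1 False (real a / real K - real q) = (if a div K = q then 1 else 0)"
proof -
  have Kp: "real K > 0" using assms by simp
  have 1: "0 \<le> real a / real K - real q \<longleftrightarrow> q * K \<le> a"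
  proof -
    have "0 \<le> real a / real K - real q \<longleftrightarrow> real q * real K \<le> real a" using Kp by (simp add: field_simps)
    also have "\<dots> \<longleftrightarrow> real (q * K) \<le> real a" by simp
    also have "\<dots> \<longleftrightarrow> q * K \<le> a" by (rule of_nat_le_iff)
    finally show ?thesis .
  qed
  have 2: "real a / real K - real q < 1 \<longleftrightarrow> a < (q+1) * K"
  proof -
    have "real a / real K - real q < 1 \<longleftrightarrow> real a < (real q + 1) * real K" using Kp by (simp add: field_simps)
    also have "\<dots> \<longleftrightarrow> real a < real ((q+1) * K)" by (simp add: algebra_simps)
    also have "\<dots> \<longleftrightarrow> a < (q+1) * K" by (rule of_nat_less_iff)
    finally show ?thesis .
  qed
  have "(0 \<le> real a / real K - real q \<and> real a / real K - real q < 1) = (a div K = q)"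
    using 1 2 div_eq_iff_mult_le_less[OF assms] by blast
  thus ?thesis by (simp add: haar1_def)
qed

lemma div_mult2_eq_div_div2: "x div (2 * K) = x div K div (2::nat)"
  by (metis div_mult2_eq mult.commute)

lemma mod_mult2_less_iff_even:
  assumes "0 < (K::nat)"
  shows "(x mod (2 * K) < K) = even (x div K)"
proof -
  have "x mod (2 * K) = K * (x div K mod 2) + x mod K" by (metis mod_mult2_eq mult.commute)
  moreover have "x mod K < K" using assms by simp
  ultimately show ?thesis by (cases "even (x div K)") (auto simp: even_iff_mod_2_eq_zero odd_iff_mod_2_eq_one)
qed

lemma haar1_True_eq: "haar1 True t = haar1 False (2 * t) - haar1 False (2 * t - 1)"
  unfolding haar1_def by auto

lemma haar1_True_sample:
  assumes "0 < (K::nat)"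
  shows "haar1 True (real a / real (2*K) - real q) =
    (if a div (2*K) = q then (if a mod (2*K) < K then 1 else -1) else 0)"
proof -
  have "2 * (real a / real (2*K) - real q) = real a / real K - real (2*q)"
    and "2 * (real a / real (2*K) - real q) - 1 = real a / real K - real (2*q + 1)"
    using assms by (simp_all add: field_simps)
  then have "haar1 True (real a / real (2*K) - real q) =
      (if a div K = 2*q then 1 else 0) - (if a div K = 2*q + 1 then 1 else 0)"
    by (simp only: haar1_True_eq haar1_False_sample[OF assms])
  also have "\<dots> = (if a div (2*K) = q then (if a mod (2*K) < K then 1 else -1) else 0)"
    unfolding div_mult2_eq_div_div2 mod_mult2_less_iff_even[OF assms] by auto
  finally show ?thesis .
qed

lemma div2_eq_even_eq_iff: "(y div 2 = y' div 2 \<and> even y = even y') \<longleftrightarrow> y = (y'::nat)"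
  by presburger

definition haar_basis_re :: "nat \<Rightarrow> nat \<Rightarrow> nat \<Rightarrow> nat \<Rightarrow> nat \<Rightarrow> real" where
  "haar_basis_re n j k a b =
     (if 2 ^ n \<le> a \<or> 2 ^ n \<le> b then 0
      else if j = 0 \<and> k = 0 then 1 / real ((2::nat) ^ n)
      else haar2 (2 ^ haar_level j k \<le> j) (2 ^ haar_level j k \<le> k) (haar_level j k)
              (j mod 2 ^ haar_level j k) (k mod 2 ^ haar_level j k)
              (real a / real ((2::nat) ^ n)) (real b / real ((2::nat) ^ n)) / real ((2::nat) ^ n))"

lemma haar_basis_eq_of_real: "haar_basis n j k a b = complex_of_real (haar_basis_re n j k a b)"
  unfolding haar_basis_def haar_basis_re_def Let_def by simp

text \<open>Array index, in the layout of \<open>haar_basis\<close>, of a level-\<open>l\<close> element whose factor in this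
  coordinate is \<open>H\<^sup>e\<close> translated by \<open>q\<close>.\<close>
definition haar_pos :: "bool \<Rightarrow> nat \<Rightarrow> nat \<Rightarrow> nat" where
  "haar_pos e l q = (if e then 2 ^ l else 0) + q"

lemma haar_level_haar_pos:
  assumes "q1 < 2 ^ l" "q2 < 2 ^ l" "e1 \<or> e2"
  shows "haar_level (haar_pos e1 l q1) (haar_pos e2 l q2) = l"
proof -
  let ?m = "max (haar_pos e1 l q1) (haar_pos e2 l q2)"
  have lo: "2 ^ l \<le> ?m" using assms unfolding haar_pos_def by auto
  have hi: "?m < 2 ^ Suc l" using assms unfolding haar_pos_def by auto
  show ?thesis unfolding haar_level_def
  proof (rule Least_equality)
    show "?m < 2 ^ Suc l" by (rule hi)
    fix y assume "?m < 2 ^ Suc y"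
    hence "(2::nat) ^ l < 2 ^ Suc y" using lo by linarith
    hence "l < Suc y" using power_less_imp_less_exp by (metis one_less_numeral_iff semiring_norm(76))
    thus "l \<le> y" by simp
  qed
qed

lemma haar_pos_props: "q < 2 ^ l \<Longrightarrow> (2 ^ l \<le> haar_pos e l q) = e \<and> haar_pos e l q mod 2 ^ l = q"
  unfolding haar_pos_def by auto

lemma pow2_mult_divide_pow2: "l \<le> n \<Longrightarrow> 2 ^ l * (real a / real ((2::nat) ^ n)) = real a / real ((2::nat) ^ (n - l))"
proof -
  assume "l \<le> n"
  hence "(2::real) ^ n = 2 ^ l * 2 ^ (n - l)" by (metis le_add_diff_inverse power_add)
  thus ?thesis by simp
qed

lemma haar_basis_re_detail:
  assumes "l < n" "q1 < 2 ^ l" "q2 < 2 ^ l" "e1 \<or> e2" "a < 2 ^ n" "b < 2 ^ n"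
  shows "haar_basis_re n (haar_pos e1 l q1) (haar_pos e2 l q2) a b =
     2 ^ l / 2 ^ n * haar1 e1 (real a / real ((2::nat) ^ (n - l)) - real q1)
                   * haar1 e2 (real b / real ((2::nat) ^ (n - l)) - real q2)"
proof -
  have nz: "(haar_pos e1 l q1 = 0 \<and> haar_pos e2 l q2 = 0) = False" using assms(4) unfolding haar_pos_def by auto
  have lv: "haar_level (haar_pos e1 l q1) (haar_pos e2 l q2) = l" using haar_level_haar_pos assms by blast
  show ?thesis unfolding haar_basis_re_def using assms nz lv haar_pos_props[OF assms(2), of e1] haar_pos_props[OF assms(3), of e2]
      pow2_mult_divide_pow2[of l n a] pow2_mult_divide_pow2[of l n b]
    by (auto simp add: haar2_def)
qed

lemma haar_basis_re_0_0: "a < 2 ^ n \<Longrightarrow> b < 2 ^ n \<Longrightarrow> haar_basis_re n 0 0 a b = 1 / 2 ^ n"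
  unfolding haar_basis_re_def by simp

lemma haar_basis_re_outside: "\<not> (a < 2 ^ n \<and> b < 2 ^ n) \<Longrightarrow> haar_basis_re n j k a b = 0"
  unfolding haar_basis_re_def by auto

lemma sum_lessThan_add: "(\<Sum>j<(m::nat)+m'. f j) = (\<Sum>j<m. f j) + (\<Sum>q<m'. f (m+q))"
  by (induction m') (simp_all add: add.assoc)

lemma sum_lessThan_double_pow: "(\<Sum>j<2 ^ Suc l. f j) = (\<Sum>q<2 ^ l. f (haar_pos False l q)) + (\<Sum>q<2 ^ l. f (haar_pos True l q))"
  unfolding haar_pos_def using sum_lessThan_add[of f "2^l" "2^l"] by (simp add: mult_2)

lemma sum_square_double_pow: "(\<Sum>j<2 ^ Suc l. \<Sum>k<2 ^ Suc l. f j k) = (\<Sum>j<2 ^ l. \<Sum>k<2 ^ l. f j k)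
   + (\<Sum>q1<2 ^ l. \<Sum>q2<2 ^ l. f (haar_pos False l q1) (haar_pos True l q2))
   + (\<Sum>q1<2 ^ l. \<Sum>q2<2 ^ l. f (haar_pos True l q1) (haar_pos False l q2))
   + (\<Sum>q1<2 ^ l. \<Sum>q2<2 ^ l. f (haar_pos True l q1) (haar_pos True l q2))"
proof -
  have p0: "haar_pos False l q = q" for q unfolding haar_pos_def by simp
  show ?thesis unfolding sum_lessThan_double_pow[of _ l] by (simp add: sum.distrib p0 add.assoc)
qed

definition haar1_gram :: "bool \<Rightarrow> nat \<Rightarrow> nat \<Rightarrow> nat \<Rightarrow> nat \<Rightarrow> real" where
  "haar1_gram e K L x x' = (\<Sum>q<2^L. haar1 e (real x / real K - real q) * haar1 e (real x' / real K - real q))"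

lemma four_power_eq: "(4::real) ^ L = 2 ^ L * 2 ^ L"
  by (simp add: power_mult_distrib[symmetric])

lemma haar1_gram_False: assumes "K > 0" "x div K < 2^L" "x' div K < 2^L"
  shows "haar1_gram False K L x x' = (if x div K = x' div K then 1 else 0)"
proof -
  have "haar1_gram False K L x x' = (\<Sum>q<2^L. if q = x div K then (if x' div K = q then 1 else 0) else 0)"
    unfolding haar1_gram_def haar1_False_sample[OF assms(1)] by (intro sum.cong refl) auto
  also have "\<dots> = (if x div K = x' div K then 1 else 0)" using assms(2) by (simp add: sum.delta)
  finally show ?thesis .
qed

lemma haar1_gram_True: assumes "K > 0" "x div (2*K) < 2^L" "x' div (2*K) < 2^L"
  shows "haar1_gram True (2*K) L x x' = (if x div (2*K) = x' div (2*K) then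
     (if (x mod (2*K) < K) = (x' mod (2*K) < K) then 1 else -1) else 0)"
proof -
  have "haar1_gram True (2*K) L x x' = (\<Sum>q<2^L. if q = x div (2*K) then
      (if x' div (2*K) = q then (if (x mod (2*K) < K) = (x' mod (2*K) < K) then 1 else -1) else 0) else 0)"
    unfolding haar1_gram_def haar1_True_sample[OF assms(1)] by (intro sum.cong refl) auto
  also have "\<dots> = (if x div (2*K) = x' div (2*K) then
     (if (x mod (2*K) < K) = (x' mod (2*K) < K) then 1 else -1) else 0)" using assms(2) by (simp add: sum.delta)
  finally show ?thesis .
qed

lemma div_double_eq_iff: assumes "(K::nat) > 0"
  shows "(x div (2*K) = x' div (2*K) \<and> (x mod (2*K) < K) = (x' mod (2*K) < K)) \<longleftrightarrow> x div K = x' div K"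
  unfolding div_mult2_eq_div_div2 mod_mult2_less_iff_even[OF assms] by (rule div2_eq_even_eq_iff)

lemma haar1_gram_sum: assumes "K > 0" "x div (2*K) < 2^L" "x' div (2*K) < 2^L"
  shows "haar1_gram False (2*K) L x x' + haar1_gram True (2*K) L x x' = 2 * (if x div K = x' div K then 1 else 0)"
proof -
  have "2*K > 0" using assms by simp
  have A: "haar1_gram False (2*K) L x x' = (if x div (2*K) = x' div (2*K) then 1 else 0)" by (rule haar1_gram_False[OF \<open>2*K>0\<close> assms(2,3)])
  have B: "haar1_gram True (2*K) L x x' = (if x div (2*K) = x' div (2*K) then
     (if (x mod (2*K) < K) = (x' mod (2*K) < K) then 1 else -1) else 0)" by (rule haar1_gram_True[OF assms])
  have C: "(x div (2*K) = x' div (2*K) \<and> (x mod (2*K) < K) = (x' mod (2*K) < K)) \<longleftrightarrow> x div K = x' div K"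
    by (rule div_double_eq_iff[OF assms(1)])
  show ?thesis
  proof (cases "x div (2*K) = x' div (2*K)")
    case True thus ?thesis using A B C by (cases "(x mod (2*K) < K) = (x' mod (2*K) < K)") simp_all
  next
    case False thus ?thesis using A B C by simp
  qed
qed

lemma haar_basis_re_level_gram:
  assumes "L < n" "e1 \<or> e2" "a < 2^n" "b < 2^n" "a' < 2^n" "b' < 2^n"
  shows "(\<Sum>q1<2^L. \<Sum>q2<2^L. haar_basis_re n (haar_pos e1 L q1) (haar_pos e2 L q2) a b * haar_basis_re n (haar_pos e1 L q1) (haar_pos e2 L q2) a' b')
     = 4^L/4^n * haar1_gram e1 (2^(n-L)) L a a' * haar1_gram e2 (2^(n-L)) L b b'"
proof -
  let ?h = "\<lambda>e x q. haar1 e (real x / real ((2::nat) ^ (n - L)) - real q)"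
  have "(\<Sum>q1<2^L. \<Sum>q2<2^L. haar_basis_re n (haar_pos e1 L q1) (haar_pos e2 L q2) a b * haar_basis_re n (haar_pos e1 L q1) (haar_pos e2 L q2) a' b')
     = (\<Sum>q1<2^L. \<Sum>q2<2^L. 4^L/4^n * (?h e1 a q1 * ?h e1 a' q1) * (?h e2 b q2 * ?h e2 b' q2))"
  proof (intro sum.cong refl)
    fix q1 q2 :: nat assume "q1 \<in> {..<2^L}" "q2 \<in> {..<2^L}"
    thus "haar_basis_re n (haar_pos e1 L q1) (haar_pos e2 L q2) a b * haar_basis_re n (haar_pos e1 L q1) (haar_pos e2 L q2) a' b' =
       4^L/4^n * (?h e1 a q1 * ?h e1 a' q1) * (?h e2 b q2 * ?h e2 b' q2)"
      using assms by (simp add: haar_basis_re_detail four_power_eq)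
  qed
  also have "\<dots> = 4^L/4^n * (\<Sum>q1<2^L. \<Sum>q2<2^L. (?h e1 a q1 * ?h e1 a' q1) * (?h e2 b q2 * ?h e2 b' q2))"
    by (simp add: sum_distrib_left mult.assoc)
  also have "(\<Sum>q1<2^L. \<Sum>q2<2^L. (?h e1 a q1 * ?h e1 a' q1) * (?h e2 b q2 * ?h e2 b' q2)) =
     (\<Sum>q1<2^L. ?h e1 a q1 * ?h e1 a' q1) * (\<Sum>q2<2^L. ?h e2 b q2 * ?h e2 b' q2)"
    by (rule sum_product[symmetric])
  finally show ?thesis unfolding haar1_gram_def by (simp add: mult.assoc)
qed

lemma pow_diff_Suc_eq: "L < n \<Longrightarrow> (2::nat) ^ (n - L) = 2 * 2 ^ (n - Suc L)"
proof -
  assume "L < n"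
  hence "n - L = Suc (n - Suc L)" by simp
  thus ?thesis by simp
qed

lemma div_pow_diff_less: "x < 2 ^ n \<Longrightarrow> L \<le> n \<Longrightarrow> x div 2 ^ (n - L) < (2::nat) ^ L"
proof -
  assume "x < 2 ^ n" "L \<le> n"
  moreover have "(2::nat) ^ n = 2 ^ L * 2 ^ (n - L)" using \<open>L \<le> n\<close> by (simp add: power_add[symmetric])
  ultimately show ?thesis by (simp add: div_less_iff_less_mult)
qed

lemma haar_kernel_levels:
  assumes "a < 2^n" "b < 2^n" "a' < 2^n" "b' < 2^n"
  shows "L \<le> n \<Longrightarrow> (\<Sum>j<2^L. \<Sum>k<2^L. haar_basis_re n j k a b * haar_basis_re n j k a' b') =
    4^L/4^n * ((if a div 2^(n-L) = a' div 2^(n-L) then 1 else 0) * (if b div 2^(n-L) = b' div 2^(n-L) then 1 else 0))"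
proof (induction L)
  case 0
  have "a div 2^n = 0" "a' div 2^n = 0" "b div 2^n = 0" "b' div 2^n = 0" using assms by simp_all
  moreover have "(1/2^n) * (1/2^n) = (1/4^n :: real)" by (simp add: four_power_eq)
  ultimately show ?case using assms by (simp add: haar_basis_re_0_0)
next
  case (Suc L)
  hence Ln: "L < n" by simp
  define K' :: nat where "K' = 2 ^ (n - Suc L)"
  have K'0: "K' > 0" unfolding K'_def by simp
  have KK: "(2::nat) ^ (n - L) = 2 * K'" unfolding K'_def using pow_diff_Suc_eq[OF Ln] .
  let ?K = "(2::nat) ^ (n - L)"
  have dl: "x div (2 * K') < 2 ^ L" if "x < 2^n" for x using div_pow_diff_less[OF that, of L] Ln KK by simp
  define gFa where "gFa = haar1_gram False (2*K') L a a'"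
  define gTa where "gTa = haar1_gram True (2*K') L a a'"
  define gFb where "gFb = haar1_gram False (2*K') L b b'"
  define gTb where "gTb = haar1_gram True (2*K') L b b'"
  have hFa: "gFa = (if a div (2*K') = a' div (2*K') then 1 else 0)" unfolding gFa_def
    using haar1_gram_False[of "2*K'" a L a'] K'0 dl assms by simp
  have hFb: "gFb = (if b div (2*K') = b' div (2*K') then 1 else 0)" unfolding gFb_def
    using haar1_gram_False[of "2*K'" b L b'] K'0 dl assms by simp
  have sa: "gFa + gTa = 2 * (if a div K' = a' div K' then 1 else 0)" unfolding gFa_def gTa_def
    using haar1_gram_sum[OF K'0] dl assms by simp
  have sb: "gFb + gTb = 2 * (if b div K' = b' div K' then 1 else 0)" unfolding gFb_def gTb_def
    using haar1_gram_sum[OF K'0] dl assms by simp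
  let ?f = "\<lambda>j k. haar_basis_re n j k a b * haar_basis_re n j k a' b'"
  have "(\<Sum>j<2^Suc L. \<Sum>k<2^Suc L. ?f j k) = (\<Sum>j<2 ^ L. \<Sum>k<2 ^ L. ?f j k)
   + (\<Sum>q1<2 ^ L. \<Sum>q2<2 ^ L. ?f (haar_pos False L q1) (haar_pos True L q2))
   + (\<Sum>q1<2 ^ L. \<Sum>q2<2 ^ L. ?f (haar_pos True L q1) (haar_pos False L q2))
   + (\<Sum>q1<2 ^ L. \<Sum>q2<2 ^ L. ?f (haar_pos True L q1) (haar_pos True L q2))" by (rule sum_square_double_pow)
  also have "(\<Sum>j<2 ^ L. \<Sum>k<2 ^ L. ?f j k) = 4^L/4^n * (gFa * gFb)"
    using Suc.IH Ln hFa hFb KK by simp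
  also have "(\<Sum>q1<2 ^ L. \<Sum>q2<2 ^ L. ?f (haar_pos False L q1) (haar_pos True L q2)) = 4^L/4^n * gFa * gTb"
    unfolding gFa_def gTb_def using haar_basis_re_level_gram[OF Ln, of False True] assms KK by simp
  also have "(\<Sum>q1<2 ^ L. \<Sum>q2<2 ^ L. ?f (haar_pos True L q1) (haar_pos False L q2)) = 4^L/4^n * gTa * gFb"
    unfolding gTa_def gFb_def using haar_basis_re_level_gram[OF Ln, of True False] assms KK by simp
  also have "(\<Sum>q1<2 ^ L. \<Sum>q2<2 ^ L. ?f (haar_pos True L q1) (haar_pos True L q2)) = 4^L/4^n * gTa * gTb"
    unfolding gTa_def gTb_def using haar_basis_re_level_gram[OF Ln, of True True] assms KK by simp
  also have "4^L/4^n * (gFa * gFb) + 4^L/4^n * gFa * gTb + 4^L/4^n * gTa * gFb + 4^L/4^n * gTa * gTb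
      = 4^L/4^n * ((gFa + gTa) * (gFb + gTb))" by (simp add: algebra_simps add_divide_distrib)
  also have "\<dots> = 4^Suc L/4^n * ((if a div K' = a' div K' then 1 else 0) * (if b div K' = b' div K' then 1 else 0))"
    unfolding sa sb by simp
  finally show ?case unfolding K'_def by simp
qed

lemma haar_kernel:
  assumes "a < 2^n" "b < 2^n" "a' < 2^n" "b' < 2^n"
  shows "(\<Sum>j<2^n. \<Sum>k<2^n. haar_basis_re n j k a b * haar_basis_re n j k a' b') = (if a = a' \<and> b = b' then 1 else 0)"
  using haar_kernel_levels[OF assms, of n] by simp

section \<open>Haar coefficients and total variation\<close>

text \<open>Samples of \<open>H\<^sup>0\<close> and \<open>H\<^sup>1\<close> on the \<open>q\<close>-th block of length \<open>K\<close>, resp. \<open>2K'\<close>.\<close>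
definition block_ind :: "nat \<Rightarrow> nat \<Rightarrow> nat \<Rightarrow> real" where
  "block_ind K q x = (if x div K = q then 1 else 0)"

definition block_sign :: "nat \<Rightarrow> nat \<Rightarrow> nat \<Rightarrow> real" where
  "block_sign K' q x = (if x div (2*K') = q then (if x mod (2*K') < K' then 1 else -1) else 0)"

definition block_variation :: "nat \<Rightarrow> nat \<Rightarrow> nat \<Rightarrow> (nat \<Rightarrow> complex) \<Rightarrow> real" where
  "block_variation N K q f = (\<Sum>i<N - 1. if i div K = q then cmod (f (Suc i) - f i) else 0)"

lemma block_variation_nonneg: "0 \<le> block_variation N K q f"
  unfolding block_variation_def by (intro sum_nonneg) auto

lemma norm_diff_le_sum_steps: "cmod (f (x + d) - f x) \<le> (\<Sum>i\<in>{x..<x+d}. cmod (f (Suc i) - f (i::nat)))"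
proof (induction d)
  case 0 thus ?case by simp
next
  case (Suc d)
  have "cmod (f (x + Suc d) - f x) \<le> cmod (f (Suc (x+d)) - f (x+d)) + cmod (f (x + d) - f x)"
    using norm_triangle_ineq[of "f (Suc (x+d)) - f (x+d)" "f (x + d) - f x"] by simp
  also have "\<dots> \<le> cmod (f (Suc (x+d)) - f (x+d)) + (\<Sum>i\<in>{x..<x+d}. cmod (f (Suc i) - f i))"
    using Suc.IH by simp
  also have "\<dots> = (\<Sum>i\<in>{x..<x+Suc d}. cmod (f (Suc i) - f i))" by simp
  finally show ?case .
qed

lemma sum_block_sign_eq:
  fixes f :: "nat \<Rightarrow> complex"
  assumes K0: "K' > 0" and qN: "(q+1)*(2*K') \<le> N"
  shows "(\<Sum>a<N. of_real (block_sign K' q a) * f a) = (\<Sum>r<K'. f (q*(2*K') + r) - f (q*(2*K') + (K' + r)))"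
proof -
  define K where "K = 2*K'"
  have K0': "K > 0" using K0 unfolding K_def by simp
  define R where "R = N - q*K - 2*K'"
  have NN: "N = q*K + (K' + (K' + R))" using qN unfolding R_def K_def by (simp add: algebra_simps)
  define g where "g a = of_real (block_sign K' q a) * f a" for a
  have z1: "(\<Sum>a<q*K. g a) = 0"
  proof (intro sum.neutral ballI)
    fix a assume "a \<in> {..<q*K}"
    hence "a div K < q" using K0' by (simp add: div_less_iff_less_mult)
    thus "g a = 0" unfolding g_def block_sign_def K_def by simp
  qed
  have z2: "(\<Sum>r<R. g (q*K + (K' + (K' + r)))) = 0"
  proof (intro sum.neutral ballI)
    fix r assume "r \<in> {..<R}"
    have "q*K + (K' + (K' + r)) = (q+1)*K + r" unfolding K_def by (simp add: algebra_simps)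
    hence "(q*K + (K' + (K' + r))) div K \<ge> q + 1" using K0' by (metis div_le_mono div_mult_self1_is_m le_add1 mult.commute)
    thus "g (q*K + (K' + (K' + r))) = 0" unfolding g_def block_sign_def K_def by auto
  qed
  have p1: "g (q*K + r) = f (q*K + r)" if "r < K'" for r
  proof -
    have "r < K" using that unfolding K_def by simp
    hence "(q*K + r) div K = q \<and> (q*K + r) mod K = r" by simp
    thus ?thesis unfolding g_def block_sign_def K_def[symmetric] using that by simp
  qed
  have p2: "g (q*K + (K' + r)) = - f (q*K + (K' + r))" if "r < K'" for r
  proof -
    have "K' + r < K" using that unfolding K_def by simp
    hence "(q*K + (K' + r)) div K = q \<and> (q*K + (K' + r)) mod K = K' + r" by simp
    thus ?thesis unfolding g_def block_sign_def K_def[symmetric] using that by simp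
  qed
  have "(\<Sum>a<N. g a) = (\<Sum>a<q*K. g a) + ((\<Sum>r<K'. g (q*K + r)) + ((\<Sum>r<K'. g (q*K + (K' + r)))
       + (\<Sum>r<R. g (q*K + (K' + (K' + r))))))"
    unfolding NN by (simp add: sum_lessThan_add add.assoc)
  also have "\<dots> = (\<Sum>r<K'. f (q*K + r) - f (q*K + (K' + r)))"
    using z1 z2 p1 p2 by (simp add: sum_subtractf sum_negf)
  finally show ?thesis unfolding g_def K_def .
qed

lemma norm_block_diff_le_block_variation:
  fixes f :: "nat \<Rightarrow> complex"
  assumes K0: "K' > 0" and qN: "(q+1)*(2*K') \<le> N" and r: "r < K'"
  shows "cmod (f (q*(2*K') + r) - f (q*(2*K') + (K' + r))) \<le> block_variation N (2*K') q f"
proof -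
  define K where "K = 2*K'"
  have K0': "K > 0" using K0 unfolding K_def by simp
  have "cmod (f (q*K + r) - f (q*K + (K' + r))) = cmod (f (q*K + r + K') - f (q*K + r))"
    by (simp add: norm_minus_commute add.assoc add.commute add.left_commute)
  also have "\<dots> \<le> (\<Sum>i\<in>{q*K+r..<q*K+r+K'}. cmod (f (Suc i) - f i))" by (rule norm_diff_le_sum_steps)
  also have "\<dots> \<le> (\<Sum>i\<in>{i. i<N-1 \<and> i div K = q}. cmod (f (Suc i) - f i))"
  proof (rule sum_mono2)
    show "{q*K+r..<q*K+r+K'} \<subseteq> {i. i<N-1 \<and> i div K = q}"
    proof
      fix i assume i: "i \<in> {q*K+r..<q*K+r+K'}"
      have a: "q*K \<le> i" "i < q*K + K - 1" using i r K0 unfolding K_def by auto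
      hence "i < N - 1" using qN unfolding K_def by (simp add: algebra_simps)
      moreover have "i div K = q" using a div_eq_iff_mult_le_less[OF K0', of i q] by (simp add: algebra_simps)
      ultimately show "i \<in> {i. i<N-1 \<and> i div K = q}" by simp
    qed
  qed auto
  also have "\<dots> = block_variation N K q f"
    unfolding block_variation_def by (simp add: sum.If_cases Collect_conj_eq lessThan_def Int_commute)
  finally show ?thesis unfolding K_def .
qed

lemma block_sign_sum_le_variation:
  fixes f :: "nat \<Rightarrow> complex"
  assumes "K' > 0" and "(q+1)*(2*K') \<le> N"
  shows "cmod (\<Sum>a<N. of_real (block_sign K' q a) * f a) \<le> real K' * block_variation N (2*K') q f"
proof -
  have "cmod (\<Sum>a<N. of_real (block_sign K' q a) * f a)
      \<le> (\<Sum>r<K'. cmod (f (q*(2*K') + r) - f (q*(2*K') + (K' + r))))"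
    unfolding sum_block_sign_eq[OF assms] by (rule norm_sum)
  also have "\<dots> \<le> (\<Sum>r<K'. block_variation N (2*K') q f)"
    using norm_block_diff_le_block_variation[OF assms] by (intro sum_mono) simp
  finally show ?thesis by simp
qed

lemma sum_if_div_eq_le_one: "(\<Sum>q<(M::nat). (if x div K = q then (1::real) else 0)) \<le> 1"
proof -
  have "(\<Sum>q<M. (if x div K = q then (1::real) else 0)) = (\<Sum>q<M. (if q = x div K then 1 else 0))"
    by (intro sum.cong) auto
  also have "\<dots> \<le> 1" by (subst sum.delta) auto
  finally show ?thesis .
qed

lemma sum_if_div_eq_le: assumes "\<And>q. g q \<ge> (0::real)"
  shows "(\<Sum>q<(M::nat). (if x div K = q then g q else 0)) \<le> g (x div K)"
proof -
  have "(\<Sum>q<M. (if x div K = q then g q else 0)) = (\<Sum>q<M. (if q = x div K then g q else 0))"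
    by (intro sum.cong) auto
  also have "\<dots> \<le> g (x div K)" using assms by (subst sum.delta) auto
  finally show ?thesis .
qed

lemma sum_block_variation_le: "(\<Sum>q<M. block_variation N K q f) \<le> (\<Sum>i<N - 1. cmod (f (Suc i) - f i))"
proof -
  have "(\<Sum>q<M. block_variation N K q f) = (\<Sum>i<N - 1. \<Sum>q<M. if i div K = q then cmod (f (Suc i) - f i) else 0)"
    unfolding block_variation_def by (rule sum.swap)
  also have "\<dots> \<le> (\<Sum>i<N - 1. cmod (f (Suc i) - f i))"
    by (intro sum_mono sum_if_div_eq_le[of "\<lambda>_. cmod (f (Suc _) - f _)", simplified]) simp
  finally show ?thesis .
qed

text \<open>A detail coefficient of type \<open>(1, e\<^sub>2)\<close> tests a difference across the rows of its support
  block, so it is bounded by the vertical variation of \<open>D\<close> on that block.\<close>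
lemma detail_coeff_le_block_variation:
  fixes D :: "nat \<Rightarrow> nat \<Rightarrow> complex" and g :: "nat \<Rightarrow> real"
  assumes K0: "K' > 0" and qN: "(q1+1)*(2*K') \<le> N" and g: "\<And>b. \<bar>g b\<bar> \<le> block_ind (2*K') q2 b"
  shows "cmod (\<Sum>a<N. \<Sum>b<N. D a b * of_real (block_sign K' q1 a * g b / real (2*K')))
      \<le> 1/2 * (\<Sum>b<N. block_ind (2*K') q2 b * block_variation N (2*K') q1 (\<lambda>a. D a b))"
proof -
  define K where "K = 2*K'"
  have Kpos: "real K > 0" using K0 unfolding K_def by simp
  define V where "V b = block_variation N K q1 (\<lambda>a. D a b)" for b
  have "(\<Sum>a<N. \<Sum>b<N. D a b * of_real (block_sign K' q1 a * g b / real K))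
      = (\<Sum>b<N. of_real (g b / real K) * (\<Sum>a<N. of_real (block_sign K' q1 a) * D a b))"
    by (subst sum.swap) (simp add: sum_distrib_left mult_ac)
  then have "cmod (\<Sum>a<N. \<Sum>b<N. D a b * of_real (block_sign K' q1 a * g b / real K))
      \<le> (\<Sum>b<N. cmod (of_real (g b / real K) * (\<Sum>a<N. of_real (block_sign K' q1 a) * D a b)))"
    by (simp only: norm_sum)
  also have "\<dots> \<le> (\<Sum>b<N. block_ind K q2 b / real K * (real K' * V b))"
  proof (rule sum_mono)
    fix b
    have V: "cmod (\<Sum>a<N. of_real (block_sign K' q1 a) * D a b) \<le> real K' * V b"
      unfolding V_def K_def by (rule block_sign_sum_le_variation[OF K0 qN])
    have "cmod (of_real (g b / real K) * (\<Sum>a<N. of_real (block_sign K' q1 a) * D a b))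
        = \<bar>g b\<bar> / real K * cmod (\<Sum>a<N. of_real (block_sign K' q1 a) * D a b)"
      using Kpos by (simp add: norm_mult norm_divide)
    also have "\<dots> \<le> block_ind K q2 b / real K * (real K' * V b)"
      using g[of b] V Kpos unfolding K_def by (intro mult_mono divide_right_mono) auto
    finally show "cmod (of_real (g b / real K) * (\<Sum>a<N. of_real (block_sign K' q1 a) * D a b))
        \<le> block_ind K q2 b / real K * (real K' * V b)" .
  qed
  also have "\<dots> = 1/2 * (\<Sum>b<N. block_ind K q2 b * V b)"
    unfolding K_def using K0 by (simp add: sum_distrib_left field_simps)
  finally show ?thesis unfolding V_def K_def .
qed

lemma detail_coeffs_le_variation:
  fixes D :: "nat \<Rightarrow> nat \<Rightarrow> complex" and g :: "nat \<Rightarrow> nat \<Rightarrow> real"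
  assumes K0: "K' > 0" and N: "2^L * (2*K') = N" and g: "\<And>q b. \<bar>g q b\<bar> \<le> block_ind (2*K') q b"
  shows "(\<Sum>q1<2^L. \<Sum>q2<2^L. cmod (\<Sum>a<N. \<Sum>b<N. D a b * of_real (block_sign K' q1 a * g q2 b / real (2*K'))))
     \<le> 1/2 * (\<Sum>j<N-1. \<Sum>k<N. cmod (D (Suc j) k - D j k))"
proof -
  define K where "K = 2*K'"
  define V where "V q1 b = block_variation N K q1 (\<lambda>a. D a b)" for q1 b
  have qN: "(q1+1)*(2*K') \<le> N" if "q1 < 2^L" for q1
    using mult_right_mono[of "q1 + 1" "2^L" "2*K'"] that N by simp
  have "(\<Sum>q1<2^L. \<Sum>q2<2^L. cmod (\<Sum>a<N. \<Sum>b<N. D a b * of_real (block_sign K' q1 a * g q2 b / real K)))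
      \<le> (\<Sum>q1<2^L. \<Sum>q2<2^L. 1/2 * (\<Sum>b<N. block_ind K q2 b * V q1 b))"
    unfolding K_def V_def using detail_coeff_le_block_variation[OF K0 qN g] by (intro sum_mono) auto
  also have "\<dots> = 1/2 * (\<Sum>b<N. (\<Sum>q2<2^L. block_ind K q2 b) * (\<Sum>q1<2^L. V q1 b))"
    by (simp add: sum_distrib_left sum_distrib_right sum.swap[of _ "{..<2^L}" "{..<N}"] mult_ac)
       (subst sum.swap, simp)
  also have "\<dots> \<le> 1/2 * (\<Sum>b<N. (\<Sum>q1<2^L. V q1 b))"
  proof -
    have "(\<Sum>q2<2^L. block_ind K q2 b) * (\<Sum>q1<2^L. V q1 b) \<le> (\<Sum>q1<2^L. V q1 b)" for b
    proof (rule mult_left_le_one_le)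
      show "(\<Sum>q2<2^L. block_ind K q2 b) \<le> 1" unfolding block_ind_def by (rule sum_if_div_eq_le_one)
    qed (auto simp: V_def block_ind_def block_variation_nonneg intro: sum_nonneg)
    thus ?thesis by (intro mult_left_mono sum_mono) auto
  qed
  also have "\<dots> \<le> 1/2 * (\<Sum>b<N. \<Sum>i<N-1. cmod (D (Suc i) b - D i b))"
    unfolding V_def using sum_block_variation_le by (intro mult_left_mono sum_mono) auto
  also have "\<dots> = 1/2 * (\<Sum>j<N-1. \<Sum>k<N. cmod (D (Suc j) k - D j k))"
    by (subst sum.swap) simp
  finally show ?thesis unfolding K_def .
qed

definition haar_coeff :: "nat \<Rightarrow> (nat \<Rightarrow> nat \<Rightarrow> complex) \<Rightarrow> nat \<Rightarrow> nat \<Rightarrow> complex" where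
  "haar_coeff n D j k = (\<Sum>a<2^n. \<Sum>b<2^n. D a b * of_real (haar_basis_re n j k a b))"

lemma haar_eq_haar_coeff: "haar n D j k = (if j < 2^n \<and> k < 2^n then haar_coeff n D j k else 0)"
  unfolding haar_def haar_coeff_def haar_basis_eq_of_real by simp

definition haar_factor :: "nat \<Rightarrow> bool \<Rightarrow> nat \<Rightarrow> nat \<Rightarrow> real" where
  "haar_factor K' e q x = (if e then block_sign K' q x else block_ind (2*K') q x)"

lemma haar_basis_re_factor:
  assumes "L < n" "q1 < 2 ^ L" "q2 < 2 ^ L" "e1 \<or> e2" "a < 2 ^ n" "b < 2 ^ n"
  shows "haar_basis_re n (haar_pos e1 L q1) (haar_pos e2 L q2) a b =
     haar_factor (2^(n - Suc L)) e1 q1 a * haar_factor (2^(n - Suc L)) e2 q2 b / real (2 * 2^(n - Suc L))"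
proof -
  define K' :: nat where "K' = 2 ^ (n - Suc L)"
  have K'0: "K' > 0" unfolding K'_def by simp
  have KK: "(2::nat) ^ (n - L) = 2 * K'" unfolding K'_def using pow_diff_Suc_eq[OF assms(1)] .
  have h: "haar1 e (real x / real ((2::nat) ^ (n - L)) - real q) = haar_factor K' e q x" for e q x
  proof (cases e)
    case True thus ?thesis unfolding KK haar_factor_def block_sign_def using haar1_True_sample[OF K'0, of x q] by simp
  next
    case False
    have "2 * K' > 0" using K'0 by simp
    thus ?thesis unfolding KK haar_factor_def block_ind_def using False haar1_False_sample[of "2*K'" x q] by simp
  qed
  have c: "(2::real) ^ L / 2 ^ n = 1 / real (2 * K')"
  proof -
    have "(2::real) ^ n = 2 ^ L * 2 ^ (n - L)" using assms(1) by (simp add: power_add[symmetric])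
    moreover have "real (2 * K') = 2 ^ (n - L)" using KK by (metis of_nat_numeral of_nat_power)
    ultimately show ?thesis by simp
  qed
  show ?thesis unfolding haar_basis_re_detail[OF assms] h c K'_def[symmetric] by simp
qed

lemma haar_factor_abs_le: "\<bar>haar_factor K' e q b\<bar> \<le> block_ind (2*K') q b"
  unfolding haar_factor_def block_sign_def block_ind_def by auto

lemma haar_coeff_detail:
  assumes "L < n" "q1 < 2 ^ L" "q2 < 2 ^ L" "e1 \<or> e2"
  shows "haar_coeff n D (haar_pos e1 L q1) (haar_pos e2 L q2) =
    (\<Sum>a<2^n. \<Sum>b<2^n. D a b * of_real (haar_factor (2^(n - Suc L)) e1 q1 a * haar_factor (2^(n - Suc L)) e2 q2 b / real (2 * 2^(n - Suc L))))"
  unfolding haar_coeff_def using haar_basis_re_factor[OF assms] by (intro sum.cong refl) simp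

lemma pow_level_mult: "L < n \<Longrightarrow> 2 ^ L * (2 * 2 ^ (n - Suc L)) = (2::nat) ^ n"
proof -
  assume "L < n"
  hence "n = L + Suc (n - Suc L)" by simp
  hence "(2::nat)^n = 2^L * 2^Suc (n - Suc L)" by (metis power_add)
  thus ?thesis by simp
qed

text \<open>Each of the three detail types of level \<open>L\<close> is bounded by half of the variation of \<open>D\<close> in
  the direction of one of its \<open>H\<^sup>1\<close> factors.\<close>
lemma haar_coeff_level_Suc_le:
  assumes Ln: "L < n"
  shows "(\<Sum>j<2^Suc L. \<Sum>k<2^Suc L. cmod (haar_coeff n D j k)) \<le> (\<Sum>j<2^L. \<Sum>k<2^L. cmod (haar_coeff n D j k)) + tv (2^n) D"
proof -
  define K' :: nat where "K' = 2 ^ (n - Suc L)"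
  define N :: nat where "N = 2 ^ n"
  have K'0: "K' > 0" unfolding K'_def by simp
  have N_eq: "2^L * (2*K') = N" unfolding K'_def N_def using pow_level_mult[OF Ln] .
  define Vert where "Vert = (\<Sum>j<N-1. \<Sum>k<N. cmod (D (Suc j) k - D j k))"
  define Hor where "Hor = (\<Sum>j<N. \<Sum>k<N-1. cmod (D j (Suc k) - D j k))"
  have tv_split: "tv (2^n) D = Vert + Hor" unfolding tv_def Vert_def Hor_def N_def by simp
  have Hor_nonneg: "Hor \<ge> 0" unfolding Hor_def by (intro sum_nonneg) auto
  have vertical_details: "(\<Sum>q1<2^L. \<Sum>q2<2^L. cmod (haar_coeff n D (haar_pos True L q1) (haar_pos e2 L q2))) \<le> 1/2 * Vert" for e2
  proof -
    have "(\<Sum>q1<2^L. \<Sum>q2<2^L. cmod (haar_coeff n D (haar_pos True L q1) (haar_pos e2 L q2))) =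
      (\<Sum>q1<2^L. \<Sum>q2<2^L. cmod (\<Sum>a<N. \<Sum>b<N. D a b * of_real (block_sign K' q1 a * haar_factor K' e2 q2 b / real (2*K'))))"
      using haar_coeff_detail[OF Ln, of _ _ True e2 D] unfolding K'_def N_def haar_factor_def by (intro sum.cong refl) simp
    also have "\<dots> \<le> 1/2 * Vert" unfolding Vert_def using detail_coeffs_le_variation[OF K'0 N_eq haar_factor_abs_le] by simp
    finally show ?thesis .
  qed
  have horizontal_details: "(\<Sum>q1<2^L. \<Sum>q2<2^L. cmod (haar_coeff n D (haar_pos False L q1) (haar_pos True L q2))) \<le> 1/2 * Hor"
  proof -
    define DT where "DT = (\<lambda>x y. D y x)"
    have "(\<Sum>q1<2^L. \<Sum>q2<2^L. cmod (haar_coeff n D (haar_pos False L q1) (haar_pos True L q2))) =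
      (\<Sum>q1<2^L. \<Sum>q2<2^L. cmod (\<Sum>a<N. \<Sum>b<N. D a b * of_real (block_ind (2*K') q1 a * block_sign K' q2 b / real (2*K'))))"
      using haar_coeff_detail[OF Ln, of _ _ False True D] unfolding K'_def N_def haar_factor_def by (intro sum.cong refl) simp
    also have "\<dots> = (\<Sum>q2<2^L. \<Sum>q1<2^L. cmod (\<Sum>b<N. \<Sum>a<N. DT b a * of_real (block_sign K' q2 b * block_ind (2*K') q1 a / real (2*K'))))"
      unfolding DT_def by (subst sum.swap) (intro sum.cong refl, subst (2) sum.swap, simp add: mult_ac)
    also have "\<dots> \<le> 1/2 * (\<Sum>j<N-1. \<Sum>k<N. cmod (DT (Suc j) k - DT j k))"
      using detail_coeffs_le_variation[OF K'0 N_eq, of "\<lambda>q x. block_ind (2*K') q x" DT] unfolding block_ind_def by simp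
    also have "(\<Sum>j<N-1. \<Sum>k<N. cmod (DT (Suc j) k - DT j k)) = Hor"
      unfolding DT_def Hor_def by (rule sum.swap)
    finally show ?thesis .
  qed
  let ?f = "\<lambda>j k. cmod (haar_coeff n D j k)"
  have "(\<Sum>j<2^Suc L. \<Sum>k<2^Suc L. ?f j k) = (\<Sum>j<2 ^ L. \<Sum>k<2 ^ L. ?f j k)
   + (\<Sum>q1<2 ^ L. \<Sum>q2<2 ^ L. ?f (haar_pos False L q1) (haar_pos True L q2))
   + (\<Sum>q1<2 ^ L. \<Sum>q2<2 ^ L. ?f (haar_pos True L q1) (haar_pos False L q2))
   + (\<Sum>q1<2 ^ L. \<Sum>q2<2 ^ L. ?f (haar_pos True L q1) (haar_pos True L q2))" by (rule sum_square_double_pow)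
  also have "\<dots> \<le> (\<Sum>j<2 ^ L. \<Sum>k<2 ^ L. ?f j k) + 1/2 * Hor + 1/2 * Vert + 1/2 * Vert"
    using horizontal_details vertical_details[of False] vertical_details[of True] by linarith
  also have "\<dots> \<le> (\<Sum>j<2 ^ L. \<Sum>k<2 ^ L. ?f j k) + tv (2^n) D" using tv_split Hor_nonneg by simp
  finally show ?thesis .
qed

lemma haar_coeff_tail_le:
  assumes "L0 \<le> n"
  shows "(\<Sum>j<2^n. \<Sum>k<2^n. cmod (haar_coeff n D j k)) \<le> (\<Sum>j<2^L0. \<Sum>k<2^L0. cmod (haar_coeff n D j k)) + real (n - L0) * tv (2^n) D"
proof -
  have "d + L0 \<le> n \<Longrightarrow> (\<Sum>j<2^(L0+d). \<Sum>k<2^(L0+d). cmod (haar_coeff n D j k)) \<le> (\<Sum>j<2^L0. \<Sum>k<2^L0. cmod (haar_coeff n D j k)) + real d * tv (2^n) D" for d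
  proof (induction d)
    case 0 thus ?case by simp
  next
    case (Suc d)
    have "L0 + d < n" using Suc.prems by simp
    from haar_coeff_level_Suc_le[OF this, of D]
    have "(\<Sum>j<2^(L0 + Suc d). \<Sum>k<2^(L0 + Suc d). cmod (haar_coeff n D j k)) \<le> (\<Sum>j<2^(L0+d). \<Sum>k<2^(L0+d). cmod (haar_coeff n D j k)) + tv (2^n) D"
      by simp
    also have "\<dots> \<le> (\<Sum>j<2^L0. \<Sum>k<2^L0. cmod (haar_coeff n D j k)) + real d * tv (2^n) D + tv (2^n) D"
      using Suc.IH Suc.prems by simp
    finally show ?case by (simp add: algebra_simps)
  qed
  from this[of "n - L0"] show ?thesis using assms by simp
qed

lemma sum4_swap: "(\<Sum>j<N. \<Sum>k<N. \<Sum>a<M. \<Sum>b<M. f j k a b) = (\<Sum>a<M. \<Sum>b<M. \<Sum>j<N. \<Sum>k<(N::nat). f j k a (b::nat) :: 'z::comm_monoid_add)"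
proof -
  have "(\<Sum>j<N. \<Sum>k<N. \<Sum>a<M. \<Sum>b<M. f j k a b) = (\<Sum>j<N. \<Sum>a<M. \<Sum>k<N. \<Sum>b<M. f j k a b)"
    by (rule sum.cong[OF refl], rule sum.swap)
  also have "\<dots> = (\<Sum>a<M. \<Sum>j<N. \<Sum>k<N. \<Sum>b<M. f j k a b)" by (rule sum.swap)
  also have "\<dots> = (\<Sum>a<M. \<Sum>j<N. \<Sum>b<M. \<Sum>k<N. f j k a b)"
    by (rule sum.cong[OF refl], rule sum.cong[OF refl], rule sum.swap)
  also have "\<dots> = (\<Sum>a<M. \<Sum>b<M. \<Sum>j<N. \<Sum>k<N. f j k a b)"
    by (rule sum.cong[OF refl], rule sum.swap)
  finally show ?thesis .
qed

lemma haar_synthesis: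
  assumes "a < 2^n" "b < 2^n"
  shows "(\<Sum>j<2^n. \<Sum>k<2^n. haar_coeff n D j k * of_real (haar_basis_re n j k a b)) = D a b"
proof -
  have "(\<Sum>j<2^n. \<Sum>k<2^n. haar_coeff n D j k * of_real (haar_basis_re n j k a b))
     = (\<Sum>j<2^n. \<Sum>k<2^n. \<Sum>a'<2^n. \<Sum>b'<2^n. D a' b' * of_real (haar_basis_re n j k a' b' * haar_basis_re n j k a b))"
    unfolding haar_coeff_def by (simp add: sum_distrib_right mult.assoc)
  also have "\<dots> = (\<Sum>a'<2^n. \<Sum>b'<2^n. \<Sum>j<2^n. \<Sum>k<2^n. D a' b' * of_real (haar_basis_re n j k a' b' * haar_basis_re n j k a b))"
    by (rule sum4_swap)
  also have "\<dots> = (\<Sum>a'<2^n. \<Sum>b'<2^n. D a' b' * of_real (\<Sum>j<2^n. \<Sum>k<2^n. haar_basis_re n j k a' b' * haar_basis_re n j k a b))"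
    by (simp add: sum_distrib_left)
  also have "\<dots> = (\<Sum>a'<2^n. \<Sum>b'<2^n. (if a' = a then (if b' = b then D a' b' else 0) else 0))"
    using assms by (intro sum.cong refl) (simp add: haar_kernel)
  also have "\<dots> = (\<Sum>a'<2^n. if a' = a then D a b else 0)"
  proof (rule sum.cong[OF refl])
    fix a' show "(\<Sum>b'<2^n. (if a' = a then (if b' = b then D a' b' else 0) else 0)) = (if a' = a then D a b else 0)"
      using assms by (cases "a' = a") (simp_all add: sum.delta)
  qed
  also have "\<dots> = D a b" using assms by (simp add: sum.delta)
  finally show ?thesis .
qed

lemma haar_inv_haar:
  assumes "D \<in> mats (2^n)"
  shows "haar_inv n (haar n D) = D"
proof (intro ext)
  fix a b
  show "haar_inv n (haar n D) a b = D a b"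
  proof (cases "a < 2^n \<and> b < 2^n")
    case True
    have "haar_inv n (haar n D) a b = (\<Sum>j<2^n. \<Sum>k<2^n. haar_coeff n D j k * of_real (haar_basis_re n j k a b))"
      unfolding haar_inv_def haar_eq_haar_coeff haar_basis_eq_of_real by (intro sum.cong refl) simp
    thus ?thesis using haar_synthesis True by simp
  next
    case False
    hence "D a b = 0" using assms unfolding mats_def by auto
    moreover have "haar_inv n (haar n D) a b = 0" unfolding haar_inv_def haar_basis_eq_of_real using False haar_basis_re_outside by simp
    ultimately show ?thesis by simp
  qed
qed

lemma of_real_cmod_power2: "(complex_of_real (cmod z))^2 = z * cnj z"
  using complex_norm_square[of z] by simp

lemma haar_parseval:
  shows "(\<Sum>a<2^n. \<Sum>b<2^n. (cmod (D a b))^2) = (\<Sum>j<2^n. \<Sum>k<2^n. (cmod (haar_coeff n D j k))^2)"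
proof -
  have "complex_of_real (\<Sum>a<2^n. \<Sum>b<2^n. (cmod (D a b))^2) = (\<Sum>a<2^n. \<Sum>b<2^n. D a b * cnj (D a b))"
    by (simp add: of_real_cmod_power2)
  also have "\<dots> = (\<Sum>a<2^n. \<Sum>b<2^n. D a b * cnj (\<Sum>j<2^n. \<Sum>k<2^n. haar_coeff n D j k * of_real (haar_basis_re n j k a b)))"
    by (intro sum.cong refl) (simp add: haar_synthesis)
  also have "\<dots> = (\<Sum>a<2^n. \<Sum>b<2^n. \<Sum>j<2^n. \<Sum>k<2^n. cnj (haar_coeff n D j k) * (D a b * of_real (haar_basis_re n j k a b)))"
    by (simp add: sum_distrib_left mult_ac)
  also have "\<dots> = (\<Sum>j<2^n. \<Sum>k<2^n. \<Sum>a<2^n. \<Sum>b<2^n. cnj (haar_coeff n D j k) * (D a b * of_real (haar_basis_re n j k a b)))"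
    by (rule sum4_swap[symmetric])
  also have "\<dots> = (\<Sum>j<2^n. \<Sum>k<2^n. haar_coeff n D j k * cnj (haar_coeff n D j k))"
  proof (rule sum.cong[OF refl], rule sum.cong[OF refl])
    fix j k
    have "(\<Sum>a<2^n. \<Sum>b<2^n. cnj (haar_coeff n D j k) * (D a b * of_real (haar_basis_re n j k a b)))
       = cnj (haar_coeff n D j k) * (\<Sum>a<2^n. \<Sum>b<2^n. D a b * of_real (haar_basis_re n j k a b))"
      by (simp add: sum_distrib_left)
    also have "(\<Sum>a<2^n. \<Sum>b<2^n. D a b * of_real (haar_basis_re n j k a b)) = haar_coeff n D j k" by (simp add: haar_coeff_def)
    finally show "(\<Sum>a<2^n. \<Sum>b<2^n. cnj (haar_coeff n D j k) * (D a b * of_real (haar_basis_re n j k a b)))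
       = haar_coeff n D j k * cnj (haar_coeff n D j k)" by (simp add: mult.commute)
  qed
  also have "\<dots> = complex_of_real (\<Sum>j<2^n. \<Sum>k<2^n. (cmod (haar_coeff n D j k))^2)"
    by (simp add: of_real_cmod_power2)
  finally show ?thesis using of_real_eq_iff by blast
qed

section \<open>The recovery estimate\<close>

lemma sum_lessThan_square_eq_sum_Times:
  "(\<Sum>j<N. \<Sum>k<N. f j k) = (\<Sum>p\<in>{..<N} \<times> {..<N}. f (fst p) (snd p))"
  by (simp add: sum.cartesian_product case_prod_beta)

lemma fro_eq_L2_set: "fro N X = L2_set (\<lambda>p. cmod (X (fst p) (snd p))) ({..<N} \<times> {..<N})"
  unfolding fro_def L2_set_def by (simp add: sum_lessThan_square_eq_sum_Times)

lemma haar_inv_mats: "haar_inv n X \<in> mats (2 ^ n)"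
  unfolding mats_def haar_inv_def haar_basis_eq_of_real using haar_basis_re_outside by auto

lemma haar_inv_add: "haar_inv n (\<lambda>j k. X j k + Y j k) = (\<lambda>a b. haar_inv n X a b + haar_inv n Y a b)"
  unfolding haar_inv_def by (simp add: sum.distrib distrib_right)

lemma tv_nonneg: "0 \<le> tv N D"
  unfolding tv_def by (intro add_nonneg_nonneg sum_nonneg) auto

lemma tv_div_sqrt_mult_ln_nonneg:
  assumes "1 \<le> s" and "s \<le> M"
  shows "0 \<le> tv N D / sqrt (real s) * ln (real M / real s)"
proof -
  have "real s \<le> real M" using assms(2) by (simp only: of_nat_le_iff)
  then have "1 \<le> real M / real s" using assms(1) by simp
  then show ?thesis using tv_nonneg[of N D] by simp
qed

lemma le_sqrt_mult_of_power2_le: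
  assumes "x\<^sup>2 \<le> c * y\<^sup>2" and "0 \<le> x" and "0 \<le> y"
  shows "x \<le> sqrt c * y"
  using real_sqrt_le_mono[OF assms(1)] assms(2,3) by (simp add: real_sqrt_mult)

lemma sqrt_mult_le_of_power2_le:
  assumes "c * y\<^sup>2 \<le> x\<^sup>2" and "0 \<le> x" and "0 \<le> y"
  shows "sqrt c * y \<le> x"
  using real_sqrt_le_mono[OF assms(1)] assms(2,3) by (simp add: real_sqrt_mult)

lemma rip_mono:
  assumes "rip N m A s \<delta>" and "\<delta> \<le> d"
  shows "rip N m A s d"
  unfolding rip_def
proof (intro ballI impI conjI)
  fix X assume "X \<in> mats N" and "card {(j, k). j < N \<and> k < N \<and> X j k \<noteq> 0} \<le> s"
  then have "(1 - \<delta>) * (fro N X)\<^sup>2 \<le> (vnorm m (A X))\<^sup>2 \<and> (vnorm m (A X))\<^sup>2 \<le> (1 + \<delta>) * (fro N X)\<^sup>2"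
    using assms(1) unfolding rip_def by blast
  moreover have "(1 - d) * (fro N X)\<^sup>2 \<le> (1 - \<delta>) * (fro N X)\<^sup>2"
    and "(1 + \<delta>) * (fro N X)\<^sup>2 \<le> (1 + d) * (fro N X)\<^sup>2"
    using assms(2) by (simp_all add: mult_right_mono)
  ultimately show "(1 - d) * (fro N X)\<^sup>2 \<le> (vnorm m (A X))\<^sup>2"
    and "(vnorm m (A X))\<^sup>2 \<le> (1 + d) * (fro N X)\<^sup>2" by linarith+
qed

definition restrict_coeffs :: "(nat \<times> nat) set \<Rightarrow> (nat \<Rightarrow> nat \<Rightarrow> complex) \<Rightarrow> nat \<Rightarrow> nat \<Rightarrow> complex"
  where "restrict_coeffs T c j k = (if (j, k) \<in> T then c j k else 0)"

lemma restrict_coeffs_Un: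
  "T \<inter> U = {} \<Longrightarrow> restrict_coeffs (T \<union> U) c = (\<lambda>j k. restrict_coeffs T c j k + restrict_coeffs U c j k)"
  unfolding restrict_coeffs_def by (auto intro!: ext)

lemma fro_restrict_coeffs:
  assumes "T \<subseteq> {..<N} \<times> {..<N}"
  shows "fro N (restrict_coeffs T c) = L2_set (\<lambda>p. cmod (c (fst p) (snd p))) T"
proof -
  have "fro N (restrict_coeffs T c) =
      L2_set (\<lambda>p. if p \<in> T then cmod (c (fst p) (snd p)) else 0) ({..<N} \<times> {..<N})"
    unfolding fro_eq_L2_set restrict_coeffs_def by (intro L2_set_cong) auto
  also have "\<dots> = L2_set (\<lambda>p. cmod (c (fst p) (snd p))) T"
    unfolding L2_set_def using assms
    by (simp add: if_distrib[of "\<lambda>x. x\<^sup>2"] sum.If_cases Int_absorb1)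
  finally show ?thesis .
qed

lemma haar_rip_on_subsets:
  assumes lin: "lin_on_mats (2 ^ n) B" and rip: "rip (2 ^ n) m (B \<circ> haar_inv n) (2 * s) d"
    and "1 \<le> s" and "0 \<le> d" and "d < 1"
  shows "rip_on_subsets ({..<2 ^ n} \<times> {..<2 ^ n}) (\<lambda>T. B (haar_inv n (restrict_coeffs T c))) m
           (\<lambda>p. cmod (c (fst p) (snd p))) s (sqrt (1 - d)) (sqrt (1 + d))"
proof -
  let ?I = "{..<(2::nat) ^ n} \<times> {..<(2::nat) ^ n}"
  let ?w = "\<lambda>p. cmod (c (fst p) (snd p))"
  let ?A = "\<lambda>T. B (haar_inv n (restrict_coeffs T c))"
  have rip_T: "(1 - d) * (L2_set ?w T)\<^sup>2 \<le> (vnorm m (?A T))\<^sup>2 \<and> (vnorm m (?A T))\<^sup>2 \<le> (1 + d) * (L2_set ?w T)\<^sup>2"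
    if T: "T \<subseteq> ?I" "card T \<le> 2 * s" for T
  proof -
    have "restrict_coeffs T c \<in> mats (2 ^ n)"
      using T(1) unfolding mats_def restrict_coeffs_def by auto
    moreover have "card {(j, k). j < 2 ^ n \<and> k < 2 ^ n \<and> restrict_coeffs T c j k \<noteq> 0} \<le> card T"
      using finite_subset[OF T(1)] by (intro card_mono) (auto simp: restrict_coeffs_def)
    ultimately show ?thesis
      using rip T fro_restrict_coeffs[OF T(1)] unfolding rip_def by fastforce
  qed
  show ?thesis
  proof
    show "finite ?I" by simp
  next
    fix T U assume "T \<subseteq> ?I" "U \<subseteq> ?I" "T \<inter> U = {}"
    then show "?A (T \<union> U) = (\<lambda>i. ?A T i + ?A U i)"
      using lin haar_inv_mats unfolding lin_on_mats_def by (simp add: restrict_coeffs_Un haar_inv_add)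
  next
    fix T assume "T \<subseteq> ?I" "card T \<le> 2 * s"
    then show "vnorm m (?A T) \<le> sqrt (1 + d) * L2_set ?w T"
      using rip_T by (intro le_sqrt_mult_of_power2_le) (auto simp: vnorm_nonneg)
  next
    fix T assume "T \<subseteq> ?I" "card T \<le> 2 * s"
    then show "sqrt (1 - d) * L2_set ?w T \<le> vnorm m (?A T)"
      using rip_T by (intro sqrt_mult_le_of_power2_le) (auto simp: vnorm_nonneg)
  qed (use assms in auto)
qed

lemma less_power2_mono: "j < 2 ^ L \<Longrightarrow> L \<le> n \<Longrightarrow> j < (2::nat) ^ n"
  by (meson order_less_le_trans one_le_numeral power_increasing)

lemma haar_on_grid:
  "p \<in> {..<2 ^ n} \<times> {..<2 ^ n} \<Longrightarrow> haar n D (fst p) (snd p) = haar_coeff n D (fst p) (snd p)"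
  by (auto simp: haar_eq_haar_coeff)

lemma L2_set_haar: "L2_set (\<lambda>p. cmod (haar n D (fst p) (snd p))) ({..<2 ^ n} \<times> {..<2 ^ n}) = fro (2 ^ n) D"
proof -
  have "L2_set (\<lambda>p. cmod (haar n D (fst p) (snd p))) ({..<2 ^ n} \<times> {..<2 ^ n}) =
      sqrt (\<Sum>j<2 ^ n. \<Sum>k<2 ^ n. (cmod (haar_coeff n D j k))\<^sup>2)"
    unfolding L2_set_def sum_lessThan_square_eq_sum_Times by (simp add: haar_on_grid)
  then show ?thesis by (simp add: fro_def haar_parseval[of D n])
qed

lemma sum_haar_square: "L \<le> n \<Longrightarrow>
    sum (\<lambda>p. cmod (haar n D (fst p) (snd p))) ({..<2 ^ L} \<times> {..<2 ^ L}) =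
    (\<Sum>j<2 ^ L. \<Sum>k<2 ^ L. cmod (haar_coeff n D j k))"
  unfolding sum_lessThan_square_eq_sum_Times
  by (intro sum.cong refl haar_on_grid[THEN arg_cong]) (auto intro: less_power2_mono)

lemma levels_le_log:
  fixes n L s :: nat
  assumes "L < n" "s < 4^(L+1)" "2 * s < 4^n" "1 \<le> s"
  shows "real (n - L) \<le> 3 * ln (real (4^n) / real s)"
proof -
  define X where "X = real (4^n) / real s"
  have s0: "real s > 0" using assms by simp
  have "real (2 * s) < real (4^n)" using assms(3) by (simp only: of_nat_less_iff)
  hence "2 * real s < 4^n" by simp
  hence X2: "X > 2" unfolding X_def using s0 by (simp add: pos_less_divide_eq)
  have "s * 4^(n-L-1) \<le> 4^(L+1) * 4^(n-L-1)" using assms(2) by simp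
  also have "\<dots> = 4^n"
  proof -
    have "L + 1 + (n - L - 1) = n" using assms(1) by simp
    thus ?thesis by (metis power_add)
  qed
  finally have "real (s * 4^(n-L-1)) \<le> real (4^n)" by (simp only: of_nat_le_iff)
  hence "real s * 4^(n-L-1) \<le> 4^n" by simp
  hence X4: "X \<ge> 4^(n-L-1)" unfolding X_def using s0 by (simp add: field_simps)
  have "ln X \<ge> ln (4^(n-L-1))" using X4 by (intro ln_mono) auto
  hence l1: "ln X \<ge> real (n-L-1) * ln 4" by (simp add: ln_realpow)
  have "ln (4::real) = 2 * ln 2" using ln_realpow[of 2 2] by simp
  hence l4: "ln (4::real) \<ge> 4/3" using ln2_ge_two_thirds by simp
  have "ln 2 \<le> ln X" using X2 by simp
  hence l2: "ln X \<ge> 2/3" using ln2_ge_two_thirds by linarith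
  have "real (n-L-1) * (4/3) \<le> real (n-L-1) * ln 4" using l4 by (intro mult_left_mono) auto
  hence "real (n-L-1) \<le> 3/4 * ln X" using l1 by simp
  moreover have "real (n - L) = real (n-L-1) + 1" using assms(1) by simp
  ultimately show ?thesis unfolding X_def[symmetric] using l2 by simp
qed

text \<open>\<open>S\<close> consists of the levels below \<open>L\<close>, where \<open>4\<^sup>L \<le> s < 4\<^sup>L\<^sup>+\<^sup>1\<close>; each further level
  contributes at most \<open>tv D\<close>.\<close>
lemma haar_best_s_term_error:
  assumes "1 \<le> s" and "2 * s < (2 ^ n)\<^sup>2"
  obtains S where "S \<subseteq> {..<2 ^ n} \<times> {..<2 ^ n}" and "card S \<le> s"
    and "sum (\<lambda>p. cmod (haar n D (fst p) (snd p))) ({..<2 ^ n} \<times> {..<2 ^ n} - S) / sqrt s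
           \<le> 3 * (tv (2 ^ n) D / sqrt s * ln (real ((2 ^ n)\<^sup>2) / real s))"
proof -
  let ?w = "\<lambda>p. cmod (haar n D (fst p) (snd p))"
  obtain L where L: "4 ^ L \<le> s" "s < 4 ^ (L + 1)" using ex_power_ivl1[of 4 s] assms(1) by auto
  have N4: "(2 ^ n)\<^sup>2 = (4::nat) ^ n" by (simp add: power2_eq_square power_mult_distrib[symmetric])
  have Ln: "L < n"
  proof (rule ccontr)
    assume "\<not> L < n"
    then have "(4::nat) ^ n \<le> 4 ^ L" by simp
    then show False using L assms N4 by linarith
  qed
  define S where "S = {..<(2::nat) ^ L} \<times> {..<(2::nat) ^ L}"
  have SI: "S \<subseteq> {..<2 ^ n} \<times> {..<2 ^ n}"
    unfolding S_def using Ln by (auto intro: less_power2_mono)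
  moreover have "card S \<le> s" unfolding S_def using L(1) by (simp add: power_mult_distrib[symmetric])
  moreover have "sum ?w ({..<2 ^ n} \<times> {..<2 ^ n} - S) / sqrt s
      \<le> 3 * (tv (2 ^ n) D / sqrt s * ln (real ((2 ^ n)\<^sup>2) / real s))"
  proof -
    have "sum ?w ({..<2 ^ n} \<times> {..<2 ^ n} - S) = sum ?w ({..<2 ^ n} \<times> {..<2 ^ n}) - sum ?w S"
      using SI by (simp add: sum_diff)
    also have "\<dots> \<le> real (n - L) * tv (2 ^ n) D"
      using haar_coeff_tail_le[of L n D] Ln sum_haar_square[of n n D] sum_haar_square[of L n D]
      unfolding S_def by simp
    also have "\<dots> \<le> 3 * ln (real ((2 ^ n)\<^sup>2) / real s) * tv (2 ^ n) D"
      using levels_le_log[OF Ln L(2) _ assms(1)] assms(2) N4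
      by (intro mult_right_mono) (simp_all add: tv_nonneg)
    finally have "sum ?w ({..<2 ^ n} \<times> {..<2 ^ n} - S) \<le> 3 * (tv (2 ^ n) D * ln (real ((2 ^ n)\<^sup>2) / real s))"
      by (simp add: mult_ac)
    then show ?thesis by (simp add: divide_right_mono)
  qed
  ultimately show thesis ..
qed

lemma fro_le_tube_bound:
  assumes lin: "lin_on_mats (2 ^ n) B" and rip: "rip (2 ^ n) m (B \<circ> haar_inv n) (2 * s) d"
    and s: "1 \<le> s" "s \<le> (2 ^ n)\<^sup>2" and D: "D \<in> mats (2 ^ n)" and tube: "vnorm m (B D) \<le> \<epsilon>"
    and d: "0 \<le> d" "d < 1"
  shows "fro (2 ^ n) D \<le> \<epsilon> / sqrt (1 - d) + 3 * (sqrt (1 + d) / sqrt (1 - d) + 1) *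
           (tv (2 ^ n) D / sqrt s * ln (real ((2 ^ n)\<^sup>2) / real s))"
proof -
  define I where "I = {..<(2::nat) ^ n} \<times> {..<(2::nat) ^ n}"
  define w where "w = (\<lambda>p. cmod (haar n D (fst p) (snd p)))"
  define A where "A T = B (haar_inv n (restrict_coeffs T (haar n D)))" for T
  define r0 r1 where "r0 = sqrt (1 - d)" and "r1 = sqrt (1 + d)"
  define R where "R = tv (2 ^ n) D / sqrt s * ln (real ((2 ^ n)\<^sup>2) / real s)"
  interpret rip_on_subsets I A m w s r0 r1
    unfolding I_def A_def w_def r0_def r1_def using haar_rip_on_subsets[OF lin rip s(1) d] .
  have "restrict_coeffs I (haar n D) = haar n D"
    unfolding restrict_coeffs_def I_def by (auto intro!: ext simp: haar_eq_haar_coeff)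
  then have AI: "vnorm m (A I) \<le> \<epsilon>" using tube unfolding A_def by (simp add: haar_inv_haar[OF D])
  have fro_D: "fro (2 ^ n) D = L2_set w I" unfolding I_def w_def by (simp add: L2_set_haar)
  have R_nonneg: "0 \<le> R" unfolding R_def using s by (rule tv_div_sqrt_mult_ln_nonneg)
  have \<epsilon>_nonneg: "0 \<le> \<epsilon>" using tube vnorm_nonneg order_trans by blast
  show ?thesis
  proof (cases "(2 ^ n)\<^sup>2 \<le> 2 * s")
    case True
    have "card I \<le> 2 * s" using True unfolding I_def by (simp add: power2_eq_square)
    then have "r0 * fro (2 ^ n) D \<le> \<epsilon>" using lower[of I] AI fro_D by simp
    then have "fro (2 ^ n) D \<le> \<epsilon> / r0" using r0_pos by (simp add: pos_le_divide_eq mult.commute)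
    moreover have "0 \<le> 3 * (r1 / r0 + 1) * R" using R_nonneg r0_pos r1_nonneg by simp
    ultimately have "fro (2 ^ n) D \<le> \<epsilon> / r0 + 3 * (r1 / r0 + 1) * R" by linarith
    then show ?thesis unfolding r0_def r1_def R_def .
  next
    case False
    then have "2 * s < (2 ^ n)\<^sup>2" by simp
    then obtain S where SI: "S \<subseteq> I" and cS: "card S \<le> s" and \<sigma>: "sum w (I - S) / sqrt s \<le> 3 * R"
      unfolding I_def w_def R_def by (rule haar_best_s_term_error[OF s(1)])
    have "2 * s \<le> card I" using False unfolding I_def by (simp add: power2_eq_square)
    then have "fro (2 ^ n) D \<le> (\<epsilon> + r1 * (3 * R)) / r0 + 3 * R"
      using L2_set_le_best_s_term[OF _ SI cS] AI fro_D \<sigma> r0_pos r1_nonneg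
      by (smt (verit) divide_right_mono mult_left_mono)
    also have "\<dots> = \<epsilon> / r0 + 3 * (r1 / r0 + 1) * R" using r0_pos by (simp add: field_simps)
    finally show ?thesis unfolding r0_def r1_def R_def .
  qed
qed

theorem theorem8:
  fixes \<delta> :: real
  assumes "\<delta> < 1"
  shows "\<exists>C>0. \<forall>(n::nat) (s::nat) (m::nat) B D (\<epsilon>::real).
     lin_on_mats (2 ^ n) B \<and> rip (2 ^ n) m (B \<circ> haar_inv n) (2 * s) \<delta> \<and>
     1 \<le> s \<and> s \<le> (2 ^ n)\<^sup>2 \<and> D \<in> mats (2 ^ n) \<and> vnorm m (B D) \<le> \<epsilon> \<longrightarrow>
     fro (2 ^ n) D \<le> C * (tv (2 ^ n) D / sqrt (real s) * ln (real ((2 ^ n)\<^sup>2) / real s) + \<epsilon>)"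
proof -
  define d where "d = max \<delta> 0"
  have d: "0 \<le> d" "\<delta> \<le> d" "d < 1" using assms unfolding d_def by auto
  define C where "C = max (1 / sqrt (1 - d)) (3 * (sqrt (1 + d) / sqrt (1 - d) + 1))"
  have "0 < C" using d unfolding C_def by (simp add: less_max_iff_disj)
  moreover have "fro (2 ^ n) D \<le> C * (tv (2 ^ n) D / sqrt (real s) * ln (real ((2 ^ n)\<^sup>2) / real s) + \<epsilon>)"
    if "lin_on_mats (2 ^ n) B" "rip (2 ^ n) m (B \<circ> haar_inv n) (2 * s) \<delta>"
      "1 \<le> s" "s \<le> (2 ^ n)\<^sup>2" "D \<in> mats (2 ^ n)" "vnorm m (B D) \<le> \<epsilon>" for n s m B D \<epsilon>
  proof -
    define R where "R = tv (2 ^ n) D / sqrt (real s) * ln (real ((2 ^ n)\<^sup>2) / real s)"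
    have "0 \<le> R" unfolding R_def using that(3,4) by (rule tv_div_sqrt_mult_ln_nonneg)
    moreover have "0 \<le> \<epsilon>" using that(6) vnorm_nonneg order_trans by blast
    moreover have "fro (2 ^ n) D \<le> 1 / sqrt (1 - d) * \<epsilon> + 3 * (sqrt (1 + d) / sqrt (1 - d) + 1) * R"
      using fro_le_tube_bound[OF that(1) rip_mono[OF that(2) d(2)] that(3-6) d(1,3)] unfolding R_def by simp
    ultimately show ?thesis unfolding C_def R_def
      by (smt (verit) distrib_left max.cobounded1 max.cobounded2 mult_right_mono)
  qed
  ultimately show ?thesis by blast
qed

end
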